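(* In the setting described in the context, suppose $\mathrm{ev}$ is multiplicative and $\iota$-involutive. Then the following are equivalent: (FM') properties (F) and (M') both hold; (A) every object $W$ of $\mathcal{P}^1$ is a biproduct $W\cong\bigoplus_{i=1}^m\emptyset$ for some $m\in\mathbb{N}_0$.
   Context: Setting. Let $\Bbbk$ be a commutative ring with a ring involution $\iota$. Let $\mathcal{P}$ be a small $\Bbbk$-linear (strict) symmetric monoidal category with monoidal product $\sqcup$ and unit object $\emptyset$, in which every object $W$ has a chosen dual $W^r$, giving the standard identifications $\operatorname{Hom}(W_1,W_2)\cong\operatorname{Hom}(\emptyset,W_2\sqcup W_1^r)\cong\operatorname{Hom}(W_1\sqcup W_2^r,\emptyset)$. (In the paper $\mathcal{P}$ is the category of closed $\mathcal{C}$-labeled webs and prefoams.) Let $\mathrm{tr}_W$ be the categorical trace and $\mathrm{ev}\colon\operatorname{End}_{\mathcal{P}}(\emptyset)\to\Bbbk$ a $\Bbbk$-linear map; multiplicative means $\mathrm{ev}(\mathrm{id}_\emptyset)=1$ and $\mathrm{ev}(\Sigma_1\sqcup\Sigma_2)=\mathrm{ev}(\Sigma_1)\mathrm{ev}(\Sigma_2)$. Let $I_1(W,W')\subseteq\operatorname{Hom}(W,W')$ be the set of $\Sigma$ with $\mathrm{ev}(\mathrm{tr}_W(\Sigma'\circ\Sigma))=0$ for all $\Sigma'\in\operatorname{Hom}(W',W)$ (an ideal) and $\mathcal{P}^1:=\mathcal{P}/I_1$; the pairing $\langle\Sigma',\Sigma\rangle:=\mathrm{ev}(\mathrm{tr}_W(\Sigma'\circ\Sigma))$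 descends to $\mathcal{P}^1$. Reversal structure ($\iota$-involutivity): $\iota$-semilinear maps $(-)^r\colon\operatorname{Hom}(W_1,W_2)\to\operatorname{Hom}(W_2,W_1)$ with $(\Sigma^r)^r=\Sigma$, $(\Sigma_2\circ\Sigma_1)^r=\Sigma_1^r\circ\Sigma_2^r$, $\mathrm{tr}_W(\Sigma^r)=\mathrm{tr}_W(\Sigma)^r$, and $\mathrm{ev}(\Sigma^r)=\iota(\mathrm{ev}(\Sigma))$ for $\Sigma\in\operatorname{End}(\emptyset)$; these descend to $\mathcal{P}^1$. Property (M'): for all $W,W'$ the composition map $\operatorname{Hom}_{\mathcal{P}^1}(\emptyset,W')\otimes\operatorname{Hom}_{\mathcal{P}^1}(W,\emptyset)\to\operatorname{Hom}_{\mathcal{P}^1}(W,W')$ is surjective. Property (F): for all $V,W$ the module $\operatorname{Hom}_{\mathcal{P}^1}(W,V)$ is free of finite rank and $\underline{\Sigma}'\mapsto\langle\underline{\Sigma}'^r,-\rangle$ is a bijection $\operatorname{Hom}_{\mathcal{P}^1}(W,V)\to\operatorname{Hom}_{\mathcal{P}^1}(W,V)^*$. A biproduct $W\cong\bigoplus_{i=1}^m\emptyset$ in $\mathcal{P}^1$ means morphisms $f_i\colon W\to\emptyset$, $g_i\colon\emptyset\to W$ with $f_i\circ g_j=\delta_{ij}\mathrm{id}_\emptyset$ and $\sum_ig_i\circ f_i=\mathrm{id}_W$. *)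

theory Defs
  imports Main
begin

text \<open>
  A small k-linear strict symmetric monoidal category with chosen duals, encoded
  via hom-sets inside a type of morphisms.  cmp g f denotes the composite g after f.
\<close>

record ('o, 'm, 'k) lincat =
  Hom   :: "'o \<Rightarrow> 'o \<Rightarrow> 'm set"
  cmp   :: "'m \<Rightarrow> 'm \<Rightarrow> 'm"
  ide   :: "'o \<Rightarrow> 'm"
  madd  :: "'m \<Rightarrow> 'm \<Rightarrow> 'm"
  msmul :: "'k \<Rightarrow> 'm \<Rightarrow> 'm"
  mzero :: "'o \<Rightarrow> 'o \<Rightarrow> 'm"
  otens :: "'o \<Rightarrow> 'o \<Rightarrow> 'o"
  mtens :: "'m \<Rightarrow> 'm \<Rightarrow> 'm"
  unit  :: "'o"
  braid :: "'o \<Rightarrow> 'o \<Rightarrow> 'm"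
  dual  :: "'o \<Rightarrow> 'o"
  coev  :: "'o \<Rightarrow> 'm"
  evm   :: "'o \<Rightarrow> 'm"
  rev   :: "'m \<Rightarrow> 'm"

definition ring_involution :: "('k::comm_ring_1 \<Rightarrow> 'k) \<Rightarrow> bool" where
  "ring_involution \<iota> \<longleftrightarrow>
     (\<forall>a b. \<iota> (a + b) = \<iota> a + \<iota> b) \<and> (\<forall>a b. \<iota> (a * b) = \<iota> a * \<iota> b) \<and>
     \<iota> 1 = 1 \<and> (\<forall>a. \<iota> (\<iota> a) = a)"

definition linear_cat :: "('o, 'm, 'k::comm_ring_1) lincat \<Rightarrow> bool" where
  "linear_cat C \<longleftrightarrow>
    (\<forall>A B. \<forall>f\<in>Hom C A B. \<forall>g\<in>Hom C A B. madd C f g \<in> Hom C A B) \<and>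
    (\<forall>A B a. \<forall>f\<in>Hom C A B. msmul C a f \<in> Hom C A B) \<and>
    (\<forall>A B. mzero C A B \<in> Hom C A B) \<and>
    (\<forall>A B. \<forall>f\<in>Hom C A B. \<forall>g\<in>Hom C A B. \<forall>h\<in>Hom C A B.
        madd C (madd C f g) h = madd C f (madd C g h)) \<and>
    (\<forall>A B. \<forall>f\<in>Hom C A B. \<forall>g\<in>Hom C A B. madd C f g = madd C g f) \<and>
    (\<forall>A B. \<forall>f\<in>Hom C A B. madd C (mzero C A B) f = f) \<and>
    (\<forall>A B. \<forall>f\<in>Hom C A B. \<exists>g\<in>Hom C A B. madd C f g = mzero C A B) \<and>
    (\<forall>A B a. \<forall>f\<in>Hom C A B. \<forall>g\<in>Hom C A B.
        msmul C a (madd C f g) = madd C (msmul C a f) (msmul C a g)) \<and>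
    (\<forall>A B a b. \<forall>f\<in>Hom C A B. msmul C (a + b) f = madd C (msmul C a f) (msmul C b f)) \<and>
    (\<forall>A B a b. \<forall>f\<in>Hom C A B. msmul C (a * b) f = msmul C a (msmul C b f)) \<and>
    (\<forall>A B. \<forall>f\<in>Hom C A B. msmul C 1 f = f) \<and>
    \<comment> \<open>category structure\<close>
    (\<forall>A B D. \<forall>f\<in>Hom C A B. \<forall>g\<in>Hom C B D. cmp C g f \<in> Hom C A D) \<and>
    (\<forall>A. ide C A \<in> Hom C A A) \<and>
    (\<forall>A B. \<forall>f\<in>Hom C A B. cmp C (ide C B) f = f \<and> cmp C f (ide C A) = f) \<and>
    (\<forall>A B D E. \<forall>f\<in>Hom C A B. \<forall>g\<in>Hom C B D. \<forall>h\<in>Hom C D E.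
        cmp C h (cmp C g f) = cmp C (cmp C h g) f) \<and>
    \<comment> \<open>bilinearity of composition\<close>
    (\<forall>A B D. \<forall>f\<in>Hom C A B. \<forall>g1\<in>Hom C B D. \<forall>g2\<in>Hom C B D.
        cmp C (madd C g1 g2) f = madd C (cmp C g1 f) (cmp C g2 f)) \<and>
    (\<forall>A B D. \<forall>f1\<in>Hom C A B. \<forall>f2\<in>Hom C A B. \<forall>g\<in>Hom C B D.
        cmp C g (madd C f1 f2) = madd C (cmp C g f1) (cmp C g f2)) \<and>
    (\<forall>A B D a. \<forall>f\<in>Hom C A B. \<forall>g\<in>Hom C B D.
        cmp C (msmul C a g) f = msmul C a (cmp C g f) \<and>
        cmp C g (msmul C a f) = msmul C a (cmp C g f))"

definition strict_symmetric_monoidal :: "('o, 'm, 'k::comm_ring_1) lincat \<Rightarrow> bool" where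
  "strict_symmetric_monoidal C \<longleftrightarrow>
    (\<forall>A B D. otens C (otens C A B) D = otens C A (otens C B D)) \<and>
    (\<forall>A. otens C (unit C) A = A \<and> otens C A (unit C) = A) \<and>
    (\<forall>A A' B B'. \<forall>f\<in>Hom C A A'. \<forall>g\<in>Hom C B B'.
        mtens C f g \<in> Hom C (otens C A B) (otens C A' B')) \<and>
    (\<forall>A B. mtens C (ide C A) (ide C B) = ide C (otens C A B)) \<and>
    (\<forall>A A' A'' B B' B''. \<forall>f\<in>Hom C A A'. \<forall>f'\<in>Hom C A' A''.
        \<forall>g\<in>Hom C B B'. \<forall>g'\<in>Hom C B' B''.
        mtens C (cmp C f' f) (cmp C g' g) = cmp C (mtens C f' g') (mtens C f g)) \<and>
    (\<forall>A A' B B' D D'. \<forall>f\<in>Hom C A A'. \<forall>g\<in>Hom C B B'. \<forall>h\<in>Hom C D D'.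
        mtens C (mtens C f g) h = mtens C f (mtens C g h)) \<and>
    (\<forall>A A'. \<forall>f\<in>Hom C A A'. mtens C (ide C (unit C)) f = f \<and> mtens C f (ide C (unit C)) = f) \<and>
    (\<forall>A A' B B'. \<forall>f1\<in>Hom C A A'. \<forall>f2\<in>Hom C A A'. \<forall>g\<in>Hom C B B'.
        mtens C (madd C f1 f2) g = madd C (mtens C f1 g) (mtens C f2 g) \<and>
        mtens C g (madd C f1 f2) = madd C (mtens C g f1) (mtens C g f2)) \<and>
    (\<forall>A A' B B' a. \<forall>f\<in>Hom C A A'. \<forall>g\<in>Hom C B B'.
        mtens C (msmul C a f) g = msmul C a (mtens C f g) \<and>
        mtens C f (msmul C a g) = msmul C a (mtens C f g)) \<and>
    \<comment> \<open>symmetry\<close>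
    (\<forall>A B. braid C A B \<in> Hom C (otens C A B) (otens C B A)) \<and>
    (\<forall>A A' B B'. \<forall>f\<in>Hom C A A'. \<forall>g\<in>Hom C B B'.
        cmp C (mtens C g f) (braid C A B) = cmp C (braid C A' B') (mtens C f g)) \<and>
    (\<forall>A B. cmp C (braid C B A) (braid C A B) = ide C (otens C A B)) \<and>
    (\<forall>A B D. braid C A (otens C B D) =
        cmp C (mtens C (ide C B) (braid C A D)) (mtens C (braid C A B) (ide C D)))"

definition has_duals :: "('o, 'm, 'k::comm_ring_1) lincat \<Rightarrow> bool" where
  "has_duals C \<longleftrightarrow>
    (\<forall>W. coev C W \<in> Hom C (unit C) (otens C W (dual C W))) \<and>
    (\<forall>W. evm C W \<in> Hom C (otens C (dual C W) W) (unit C)) \<and>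
    (\<forall>W. cmp C (mtens C (ide C W) (evm C W)) (mtens C (coev C W) (ide C W)) = ide C W) \<and>
    (\<forall>W. cmp C (mtens C (evm C W) (ide C (dual C W))) (mtens C (ide C (dual C W)) (coev C W))
         = ide C (dual C W))"

definition tr :: "('o, 'm, 'k) lincat \<Rightarrow> 'o \<Rightarrow> 'm \<Rightarrow> 'm" where
  "tr C W f = cmp C (evm C W) (cmp C (braid C W (dual C W))
                  (cmp C (mtens C f (ide C (dual C W))) (coev C W)))"

definition setting :: "('o, 'm, 'k::comm_ring_1) lincat \<Rightarrow> ('m \<Rightarrow> 'k) \<Rightarrow> bool" where
  "setting C ev \<longleftrightarrow> linear_cat C \<and> strict_symmetric_monoidal C \<and> has_duals C \<and>
    (\<forall>f\<in>Hom C (unit C) (unit C). \<forall>g\<in>Hom C (unit C) (unit C). ev (madd C f g) = ev f + ev g) \<and>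
    (\<forall>a. \<forall>f\<in>Hom C (unit C) (unit C). ev (msmul C a f) = a * ev f)"

definition multiplicative :: "('o, 'm, 'k::comm_ring_1) lincat \<Rightarrow> ('m \<Rightarrow> 'k) \<Rightarrow> bool" where
  "multiplicative C ev \<longleftrightarrow> ev (ide C (unit C)) = 1 \<and>
    (\<forall>s1\<in>Hom C (unit C) (unit C). \<forall>s2\<in>Hom C (unit C) (unit C).
        ev (mtens C s1 s2) = ev s1 * ev s2)"

definition iota_involutive ::
  "('o, 'm, 'k::comm_ring_1) lincat \<Rightarrow> ('m \<Rightarrow> 'k) \<Rightarrow> ('k \<Rightarrow> 'k) \<Rightarrow> bool" where
  "iota_involutive C ev \<iota> \<longleftrightarrow>
    (\<forall>A B. \<forall>f\<in>Hom C A B. rev C f \<in> Hom C B A) \<and>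
    (\<forall>A B. \<forall>f\<in>Hom C A B. \<forall>g\<in>Hom C A B. rev C (madd C f g) = madd C (rev C f) (rev C g)) \<and>
    (\<forall>A B a. \<forall>f\<in>Hom C A B. rev C (msmul C a f) = msmul C (\<iota> a) (rev C f)) \<and>
    (\<forall>A B. \<forall>f\<in>Hom C A B. rev C (rev C f) = f) \<and>
    (\<forall>A B D. \<forall>f\<in>Hom C A B. \<forall>g\<in>Hom C B D. rev C (cmp C g f) = cmp C (rev C f) (rev C g)) \<and>
    (\<forall>W. \<forall>f\<in>Hom C W W. tr C W (rev C f) = rev C (tr C W f)) \<and>
    (\<forall>f\<in>Hom C (unit C) (unit C). ev (rev C f) = \<iota> (ev f))"

definition pairing :: "('o, 'm, 'k) lincat \<Rightarrow> ('m \<Rightarrow> 'k) \<Rightarrow> 'o \<Rightarrow> 'm \<Rightarrow> 'm \<Rightarrow> 'k" where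
  "pairing C ev W \<Sigma>' \<Sigma> = ev (tr C W (cmp C \<Sigma>' \<Sigma>))"

definition I1 :: "('o, 'm, 'k::zero) lincat \<Rightarrow> ('m \<Rightarrow> 'k) \<Rightarrow> 'o \<Rightarrow> 'o \<Rightarrow> 'm set" where
  "I1 C ev W W' = {\<Sigma> \<in> Hom C W W'. \<forall>\<Sigma>'\<in>Hom C W' W. pairing C ev W \<Sigma>' \<Sigma> = 0}"

text \<open>Equality of morphisms in P^1 = P/I_1 (of representatives in Hom(W,W')).\<close>
definition eq1 :: "('o, 'm, 'k::comm_ring_1) lincat \<Rightarrow> ('m \<Rightarrow> 'k) \<Rightarrow> 'o \<Rightarrow> 'o \<Rightarrow> 'm \<Rightarrow> 'm \<Rightarrow> bool" where
  "eq1 C ev W W' f g \<longleftrightarrow> madd C f (msmul C (-1) g) \<in> I1 C ev W W'"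

definition msum :: "('o, 'm, 'k) lincat \<Rightarrow> 'o \<Rightarrow> 'o \<Rightarrow> 'm list \<Rightarrow> 'm" where
  "msum C A B fs = foldr (madd C) fs (mzero C A B)"

definition lincomb :: "('o, 'm, 'k) lincat \<Rightarrow> 'o \<Rightarrow> 'o \<Rightarrow> 'k list \<Rightarrow> 'm list \<Rightarrow> 'm" where
  "lincomb C A B cs bs = msum C A B (map2 (msmul C) cs bs)"

definition propM' :: "('o, 'm, 'k::comm_ring_1) lincat \<Rightarrow> ('m \<Rightarrow> 'k) \<Rightarrow> bool" where
  "propM' C ev \<longleftrightarrow> (\<forall>W W'. \<forall>\<Sigma>\<in>Hom C W W'. \<exists>ps :: ('m \<times> 'm) list.
      (\<forall>(a, b)\<in>set ps. a \<in> Hom C (unit C) W' \<and> b \<in> Hom C W (unit C)) \<and>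
      eq1 C ev W W' \<Sigma> (msum C W W' (map (\<lambda>(a, b). cmp C a b) ps)))"

text \<open>Hom_{P^1}(W,V) is a free k-module of finite rank (basis given by representatives).\<close>
definition free_finite_rank1 :: "('o, 'm, 'k::comm_ring_1) lincat \<Rightarrow> ('m \<Rightarrow> 'k) \<Rightarrow> 'o \<Rightarrow> 'o \<Rightarrow> bool" where
  "free_finite_rank1 C ev W V \<longleftrightarrow> (\<exists>bs. set bs \<subseteq> Hom C W V \<and>
     (\<forall>\<Sigma>\<in>Hom C W V. \<exists>cs. length cs = length bs \<and> eq1 C ev W V \<Sigma> (lincomb C W V cs bs)) \<and>
     (\<forall>cs. length cs = length bs \<and> lincomb C W V cs bs \<in> I1 C ev W V \<longrightarrow> (\<forall>c\<in>set cs. c = 0)))"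

text \<open>k-linear functionals on Hom_{P^1}(W,V), i.e. on Hom(W,V) vanishing on I_1(W,V).\<close>
definition dual1 :: "('o, 'm, 'k::comm_ring_1) lincat \<Rightarrow> ('m \<Rightarrow> 'k) \<Rightarrow> 'o \<Rightarrow> 'o \<Rightarrow> ('m \<Rightarrow> 'k) set" where
  "dual1 C ev W V = {\<phi>.
     (\<forall>f\<in>Hom C W V. \<forall>g\<in>Hom C W V. \<phi> (madd C f g) = \<phi> f + \<phi> g) \<and>
     (\<forall>a. \<forall>f\<in>Hom C W V. \<phi> (msmul C a f) = a * \<phi> f) \<and>
     (\<forall>f\<in>I1 C ev W V. \<phi> f = 0)}"

text \<open>The map \<Sigma>' \<mapsto> \<langle>\<Sigma>'^r, -\<rangle> from Hom_{P^1}(W,V) to its dual is a bijection.\<close>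
definition pairing_bij :: "('o, 'm, 'k::comm_ring_1) lincat \<Rightarrow> ('m \<Rightarrow> 'k) \<Rightarrow> 'o \<Rightarrow> 'o \<Rightarrow> bool" where
  "pairing_bij C ev W V \<longleftrightarrow>
     (\<forall>\<Sigma>'\<in>Hom C W V. \<forall>\<Sigma>''\<in>Hom C W V.
        (\<forall>\<Sigma>\<in>Hom C W V. pairing C ev W (rev C \<Sigma>') \<Sigma> = pairing C ev W (rev C \<Sigma>'') \<Sigma>)
        \<longrightarrow> eq1 C ev W V \<Sigma>' \<Sigma>'') \<and>
     (\<forall>\<phi>\<in>dual1 C ev W V. \<exists>\<Sigma>'\<in>Hom C W V. \<forall>\<Sigma>\<in>Hom C W V. \<phi> \<Sigma> = pairing C ev W (rev C \<Sigma>') \<Sigma>)"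

definition propF :: "('o, 'm, 'k::comm_ring_1) lincat \<Rightarrow> ('m \<Rightarrow> 'k) \<Rightarrow> bool" where
  "propF C ev \<longleftrightarrow> (\<forall>V W. free_finite_rank1 C ev W V \<and> pairing_bij C ev W V)"

definition biproduct_of_units1 :: "('o, 'm, 'k::comm_ring_1) lincat \<Rightarrow> ('m \<Rightarrow> 'k) \<Rightarrow> 'o \<Rightarrow> nat \<Rightarrow> bool" where
  "biproduct_of_units1 C ev W m \<longleftrightarrow> (\<exists>fs gs. length fs = m \<and> length gs = m \<and>
     set fs \<subseteq> Hom C W (unit C) \<and> set gs \<subseteq> Hom C (unit C) W \<and>
     (\<forall>i<m. \<forall>j<m. eq1 C ev (unit C) (unit C) (cmp C (fs ! i) (gs ! j))
                     (if i = j then ide C (unit C) else mzero C (unit C) (unit C))) \<and>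
     eq1 C ev W W (msum C W W (map2 (cmp C) gs fs)) (ide C W))"

definition propA :: "('o, 'm, 'k::comm_ring_1) lincat \<Rightarrow> ('m \<Rightarrow> 'k) \<Rightarrow> bool" where
  "propA C ev \<longleftrightarrow> (\<forall>W. \<exists>m. biproduct_of_units1 C ev W m)"

end

theory Submission
  imports Defs
begin

text \<open>
  Everything is read through the trace pairing \<langle>S, f\<rangle> = ev(tr(S \<circ> f)): it is cyclic because the
  categorical trace is, and two morphisms agree in P^1 exactly when all their pairings agree.
  If W and V are biproducts of copies of \<emptyset> with projections p_k, p'_l and injections i_k, i'_l,
  then the morphisms i'_l p_k in Hom(W, V) and i_k p'_l in Hom(V, W) are dual bases for the pairing,
  because multiplicativity of ev lets endomorphisms of \<emptyset> act as scalars; this gives (F), and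
  \<Sigma> = \<Sum>_l i'_l (p'_l \<Sigma>) gives (M').
  Conversely, let b_1, ..., b_m be a basis of Hom_{P^1}(\<emptyset>, W) as provided by (F). By the
  bijectivity in (F) the coordinate functionals are of the form ev(p_k \<circ> -) for morphisms
  p_k : W \<rightarrow> \<emptyset>, so p_k b_l = \<delta>_kl. By (M') every endomorphism of W is, in P^1, a sum of
  morphisms a \<circ> b through \<emptyset>, so a morphism of P^1 is determined by its pairings with such
  a \<circ> b; computing these pairings identifies \<Sum>_k b_k p_k with the identity of W.
\<close>

lemma sum_nth_eq_sum_set: "distinct P \<Longrightarrow> (\<Sum>t<length P. F (P ! t)) = sum F (set P)"
  using sum_list_sum_nth[of "map F P"] by (simp add: sum_list_distinct_conv_sum_set atLeast0LessThan)

section \<open>Traces in linear rigid symmetric monoidal categories\<close>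

locale linear_rigid_symmetric_cat =
  fixes C :: "('o, 'm, 'k::comm_ring_1) lincat"
  assumes linear: "linear_cat C"
    and monoidal: "strict_symmetric_monoidal C"
    and duals: "has_duals C"
begin

abbreviation unit_obj (\<open>\<I>\<close>) where "\<I> \<equiv> unit C"
abbreviation comp (infixr \<open>\<cdot>\<close> 55) where "g \<cdot> f \<equiv> cmp C g f"
abbreviation tensor (infixr \<open>\<otimes>\<close> 60) where "f \<otimes> g \<equiv> mtens C f g"
abbreviation tensor_obj (infixr \<open>\<squnion>\<close> 60) where "A \<squnion> B \<equiv> otens C A B"
abbreviation add (infixl \<open>\<oplus>\<close> 52) where "f \<oplus> g \<equiv> madd C f g"
abbreviation smult (infixr \<open>\<star>\<close> 53) where "a \<star> f \<equiv> msmul C a f"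

lemma add_in_Hom [intro, simp]: "f \<in> Hom C A B \<Longrightarrow> g \<in> Hom C A B \<Longrightarrow> f \<oplus> g \<in> Hom C A B"
  using linear unfolding linear_cat_def by simp
lemma smult_in_Hom [intro, simp]: "f \<in> Hom C A B \<Longrightarrow> a \<star> f \<in> Hom C A B"
  using linear unfolding linear_cat_def by simp
lemma zero_in_Hom [intro, simp]: "mzero C A B \<in> Hom C A B"
  using linear unfolding linear_cat_def by simp
lemma add_assoc: "f \<in> Hom C A B \<Longrightarrow> g \<in> Hom C A B \<Longrightarrow> h \<in> Hom C A B \<Longrightarrow> f \<oplus> g \<oplus> h = f \<oplus> (g \<oplus> h)"
  using linear unfolding linear_cat_def by simp
lemma add_commute: "f \<in> Hom C A B \<Longrightarrow> g \<in> Hom C A B \<Longrightarrow> f \<oplus> g = g \<oplus> f"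
  using linear unfolding linear_cat_def by simp
lemma zero_add: "f \<in> Hom C A B \<Longrightarrow> mzero C A B \<oplus> f = f"
  using linear unfolding linear_cat_def by simp
lemma add_inverse_exists: "f \<in> Hom C A B \<Longrightarrow> \<exists>g\<in>Hom C A B. f \<oplus> g = mzero C A B"
  using linear unfolding linear_cat_def by (elim conjE) metis
lemma smult_add_left: "f \<in> Hom C A B \<Longrightarrow> (a + b) \<star> f = a \<star> f \<oplus> b \<star> f"
  using linear unfolding linear_cat_def by simp
lemma one_smult: "f \<in> Hom C A B \<Longrightarrow> 1 \<star> f = f"
  using linear unfolding linear_cat_def by simp
lemma comp_in_Hom: "f \<in> Hom C A B \<Longrightarrow> g \<in> Hom C B D \<Longrightarrow> g \<cdot> f \<in> Hom C A D"
  using linear unfolding linear_cat_def by simp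
lemma ide_in_Hom [intro, simp]: "ide C A \<in> Hom C A A"
  using linear unfolding linear_cat_def by simp
lemma comp_ide_left: "f \<in> Hom C A B \<Longrightarrow> ide C B \<cdot> f = f"
  using linear unfolding linear_cat_def by simp
lemma comp_ide_right: "f \<in> Hom C A B \<Longrightarrow> f \<cdot> ide C A = f"
  using linear unfolding linear_cat_def by simp
lemma comp_assoc:
  "f \<in> Hom C A B \<Longrightarrow> g \<in> Hom C B D \<Longrightarrow> h \<in> Hom C D E \<Longrightarrow> h \<cdot> g \<cdot> f = (h \<cdot> g) \<cdot> f"
  using linear unfolding linear_cat_def by simp
lemma comp_add_left:
  "f \<in> Hom C A B \<Longrightarrow> g \<in> Hom C B D \<Longrightarrow> g' \<in> Hom C B D \<Longrightarrow> (g \<oplus> g') \<cdot> f = g \<cdot> f \<oplus> g' \<cdot> f"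
  using linear unfolding linear_cat_def by simp
lemma comp_add_right:
  "f \<in> Hom C A B \<Longrightarrow> f' \<in> Hom C A B \<Longrightarrow> g \<in> Hom C B D \<Longrightarrow> g \<cdot> (f \<oplus> f') = g \<cdot> f \<oplus> g \<cdot> f'"
  using linear unfolding linear_cat_def by simp
lemma comp_smult_left: "f \<in> Hom C A B \<Longrightarrow> g \<in> Hom C B D \<Longrightarrow> (a \<star> g) \<cdot> f = a \<star> g \<cdot> f"
  using linear unfolding linear_cat_def by simp
lemma comp_smult_right: "f \<in> Hom C A B \<Longrightarrow> g \<in> Hom C B D \<Longrightarrow> g \<cdot> (a \<star> f) = a \<star> g \<cdot> f"
  using linear unfolding linear_cat_def by simp

lemma tensor_obj_assoc [simp]: "(A \<squnion> B) \<squnion> D = A \<squnion> B \<squnion> D"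
  using monoidal unfolding strict_symmetric_monoidal_def by simp
lemma tensor_obj_unit [simp]: "\<I> \<squnion> A = A" "A \<squnion> \<I> = A"
  using monoidal unfolding strict_symmetric_monoidal_def by simp_all
lemma tensor_in_Hom:
  "f \<in> Hom C A A' \<Longrightarrow> g \<in> Hom C B B' \<Longrightarrow> f \<otimes> g \<in> Hom C (A \<squnion> B) (A' \<squnion> B')"
  using monoidal unfolding strict_symmetric_monoidal_def by simp
lemma tensor_ide [simp]: "ide C A \<otimes> ide C B = ide C (A \<squnion> B)"
  using monoidal unfolding strict_symmetric_monoidal_def by simp
lemma interchange:
  "f \<in> Hom C A A' \<Longrightarrow> f' \<in> Hom C A' A'' \<Longrightarrow> g \<in> Hom C B B' \<Longrightarrow> g' \<in> Hom C B' B'' \<Longrightarrow>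
   (f' \<cdot> f) \<otimes> (g' \<cdot> g) = (f' \<otimes> g') \<cdot> (f \<otimes> g)"
  using monoidal unfolding strict_symmetric_monoidal_def by simp
lemma tensor_assoc:
  "f \<in> Hom C A A' \<Longrightarrow> g \<in> Hom C B B' \<Longrightarrow> h \<in> Hom C D D' \<Longrightarrow> (f \<otimes> g) \<otimes> h = f \<otimes> g \<otimes> h"
  using monoidal unfolding strict_symmetric_monoidal_def by simp
lemma tensor_unit: "f \<in> Hom C A A' \<Longrightarrow> ide C \<I> \<otimes> f = f" "f \<in> Hom C A A' \<Longrightarrow> f \<otimes> ide C \<I> = f"
  using monoidal unfolding strict_symmetric_monoidal_def by simp_all
lemma tensor_add_left:
  "f \<in> Hom C A A' \<Longrightarrow> f' \<in> Hom C A A' \<Longrightarrow> g \<in> Hom C B B' \<Longrightarrow> (f \<oplus> f') \<otimes> g = f \<otimes> g \<oplus> f' \<otimes> g"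
  using monoidal unfolding strict_symmetric_monoidal_def by simp
lemma tensor_smult_left: "f \<in> Hom C A A' \<Longrightarrow> g \<in> Hom C B B' \<Longrightarrow> (a \<star> f) \<otimes> g = a \<star> f \<otimes> g"
  using monoidal unfolding strict_symmetric_monoidal_def by simp
lemma braid_in_Hom: "braid C A B \<in> Hom C (A \<squnion> B) (B \<squnion> A)"
  using monoidal unfolding strict_symmetric_monoidal_def by simp
lemma braid_natural:
  "f \<in> Hom C A A' \<Longrightarrow> g \<in> Hom C B B' \<Longrightarrow> (g \<otimes> f) \<cdot> braid C A B = braid C A' B' \<cdot> (f \<otimes> g)"
  using monoidal unfolding strict_symmetric_monoidal_def by simp
lemma braid_inverse: "braid C B A \<cdot> braid C A B = ide C (A \<squnion> B)"
  using monoidal unfolding strict_symmetric_monoidal_def by simp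
lemma braid_hexagon: "braid C A (B \<squnion> D) = (ide C B \<otimes> braid C A D) \<cdot> (braid C A B \<otimes> ide C D)"
  using monoidal unfolding strict_symmetric_monoidal_def by simp

lemma coev_in_Hom: "coev C A \<in> Hom C \<I> (A \<squnion> dual C A)"
  using duals unfolding has_duals_def by simp
lemma evm_in_Hom: "evm C A \<in> Hom C (dual C A \<squnion> A) \<I>"
  using duals unfolding has_duals_def by simp
lemma zigzag: "(ide C A \<otimes> evm C A) \<cdot> (coev C A \<otimes> ide C A) = ide C A"
  using duals unfolding has_duals_def by simp

lemma smult_zero: assumes f: "f \<in> Hom C A B" shows "0 \<star> f = mzero C A B"
proof -
  define x where "x = 0 \<star> f"
  have x: "x \<in> Hom C A B" using f x_def by simp
  have xx: "x \<oplus> x = x" using smult_add_left[OF f, of 0 0] x_def by simp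
  obtain g where g: "g \<in> Hom C A B" "x \<oplus> g = mzero C A B" using add_inverse_exists[OF x] by blast
  have "mzero C A B = (x \<oplus> x) \<oplus> g" using xx g by simp
  also have "\<dots> = x" using add_assoc[OF x x g(1)] g add_commute[OF x zero_in_Hom] zero_add[OF x] by simp
  finally show ?thesis using x_def by simp
qed

lemma msum_in_Hom: "set xs \<subseteq> Hom C A B \<Longrightarrow> msum C A B xs \<in> Hom C A B"
  by (induction xs) (auto simp: msum_def)

lemma msum_upt_in_Hom: "(\<And>k. k < m \<Longrightarrow> F k \<in> Hom C A B) \<Longrightarrow> msum C A B (map F [0..<m]) \<in> Hom C A B"
  by (rule msum_in_Hom) auto

lemma lincomb_in_Hom: "set bs \<subseteq> Hom C A B \<Longrightarrow> lincomb C A B cs bs \<in> Hom C A B"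
  unfolding lincomb_def by (rule msum_in_Hom) (auto dest: set_zip_rightD)

lemma additive_msum:
  assumes add: "\<And>f g. f \<in> Hom C A B \<Longrightarrow> g \<in> Hom C A B \<Longrightarrow> L (f \<oplus> g) = L f + L g"
    and zero: "L (mzero C A B) = 0"
  shows "set xs \<subseteq> Hom C A B \<Longrightarrow> L (msum C A B xs) = sum_list (map L xs)"
proof (induction xs)
  case (Cons x xs)
  then show ?case using add[of x "msum C A B xs"] msum_in_Hom by (simp add: msum_def)
qed (simp add: msum_def zero)

lemma linear_lincomb:
  assumes add: "\<And>f g. f \<in> Hom C A B \<Longrightarrow> g \<in> Hom C A B \<Longrightarrow> L (f \<oplus> g) = L f + L g"
    and smult: "\<And>a f. f \<in> Hom C A B \<Longrightarrow> L (a \<star> f) = a * L f"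
    and bs: "set bs \<subseteq> Hom C A B" and len: "length cs = length bs"
  shows "L (lincomb C A B cs bs) = (\<Sum>t<length bs. cs ! t * L (bs ! t))"
proof -
  have "L (mzero C A B) = 0" using smult[of "mzero C A B" 0] smult_zero[OF zero_in_Hom] by simp
  moreover have "set (map2 (msmul C) cs bs) \<subseteq> Hom C A B" using bs by (auto dest: set_zip_rightD)
  ultimately have "L (lincomb C A B cs bs) = sum_list (map L (map2 (msmul C) cs bs))"
    unfolding lincomb_def using additive_msum[where L = L, OF add] by blast
  also have "\<dots> = (\<Sum>t<length bs. cs ! t * L (bs ! t))"
    using len bs by (simp add: sum_list_sum_nth smult atLeast0LessThan subset_iff)
  finally show ?thesis .
qed

lemma linear_lincomb_distinct:
  assumes add: "\<And>f g. f \<in> Hom C A B \<Longrightarrow> g \<in> Hom C A B \<Longrightarrow> L (f \<oplus> g) = L f + L g"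
    and smult: "\<And>a f. f \<in> Hom C A B \<Longrightarrow> L (a \<star> f) = a * L f"
    and P: "distinct P" and e: "\<And>x. x \<in> set P \<Longrightarrow> e x \<in> Hom C A B"
  shows "L (lincomb C A B (map c P) (map e P)) = (\<Sum>x\<in>set P. c x * L (e x))"
proof -
  have "L (lincomb C A B (map c P) (map e P)) = (\<Sum>t<length P. c (P ! t) * L (e (P ! t)))"
    using linear_lincomb[OF add smult, where bs = "map e P" and cs = "map c P"] e by auto
  then show ?thesis using sum_nth_eq_sum_set[OF P, of "\<lambda>x. c x * L (e x)"] by simp
qed

lemma comp_ide_ide [simp]: "ide C A \<cdot> ide C A = ide C A"
  using comp_ide_left[OF ide_in_Hom] .

lemma tensor_decompose1:
  "f \<in> Hom C A A' \<Longrightarrow> g \<in> Hom C B B' \<Longrightarrow> f \<otimes> g = (f \<otimes> ide C B') \<cdot> (ide C A \<otimes> g)"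
  using interchange[of "ide C A" A A f A' g B B' "ide C B'" B'] by (simp add: comp_ide_left comp_ide_right)
lemma tensor_decompose2:
  "f \<in> Hom C A A' \<Longrightarrow> g \<in> Hom C B B' \<Longrightarrow> f \<otimes> g = (ide C A' \<otimes> g) \<cdot> (f \<otimes> ide C B)"
  using interchange[of f A A' "ide C A'" A' "ide C B" B B g B'] by (simp add: comp_ide_left comp_ide_right)
lemma comp_tensor_ide:
  "f \<in> Hom C A A' \<Longrightarrow> f' \<in> Hom C A' A'' \<Longrightarrow> (f' \<cdot> f) \<otimes> ide C B = (f' \<otimes> ide C B) \<cdot> (f \<otimes> ide C B)"
  using interchange[of f A A' f' A'' "ide C B" B B "ide C B" B] by (simp add: comp_ide_left)
lemma ide_tensor_comp:
  "f \<in> Hom C A A' \<Longrightarrow> f' \<in> Hom C A' A'' \<Longrightarrow> ide C B \<otimes> (f' \<cdot> f) = (ide C B \<otimes> f') \<cdot> (ide C B \<otimes> f)"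
  using interchange[of "ide C B" B B "ide C B" B f A A' f' A''] by (simp add: comp_ide_left)

lemma tensor_scalars: "s \<in> Hom C \<I> \<I> \<Longrightarrow> t \<in> Hom C \<I> \<I> \<Longrightarrow> s \<otimes> t = s \<cdot> t"
  using tensor_decompose1[of s \<I> \<I> t \<I> \<I>] tensor_unit by simp

lemma tensor_slide:
  "u \<in> Hom C A A' \<Longrightarrow> v \<in> Hom C B B' \<Longrightarrow> (ide C A' \<otimes> v) \<cdot> (u \<otimes> ide C B) = (u \<otimes> ide C B') \<cdot> (ide C A \<otimes> v)"
  using tensor_decompose1 tensor_decompose2 by metis

lemma zigzag_tensor_right:
  "(ide C B \<otimes> evm C B \<otimes> ide C D) \<cdot> (coev C B \<otimes> ide C (B \<squnion> D)) = ide C (B \<squnion> D)"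
proof -
  have l: "coev C B \<otimes> ide C B \<in> Hom C B (B \<squnion> dual C B \<squnion> B)"
    and r: "ide C B \<otimes> evm C B \<in> Hom C (B \<squnion> dual C B \<squnion> B) B"
    using tensor_in_Hom[OF coev_in_Hom ide_in_Hom, of B B] tensor_in_Hom[OF ide_in_Hom evm_in_Hom, of B B]
    by simp_all
  have "ide C B \<otimes> evm C B \<otimes> ide C D = (ide C B \<otimes> evm C B) \<otimes> ide C D"
    and "coev C B \<otimes> ide C (B \<squnion> D) = (coev C B \<otimes> ide C B) \<otimes> ide C D"
    using tensor_assoc[OF ide_in_Hom evm_in_Hom ide_in_Hom, of B B D]
      tensor_assoc[OF coev_in_Hom ide_in_Hom ide_in_Hom, of B B D] by simp_all
  then show ?thesis using interchange[OF l r ide_in_Hom ide_in_Hom] zigzag[of B] by simp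
qed

lemma zigzag_tensor_left:
  "(ide C (D \<squnion> A) \<otimes> evm C A) \<cdot> ((ide C D \<otimes> coev C A) \<otimes> ide C A) = ide C (D \<squnion> A)"
proof -
  have l: "coev C A \<otimes> ide C A \<in> Hom C A (A \<squnion> dual C A \<squnion> A)"
    and r: "ide C A \<otimes> evm C A \<in> Hom C (A \<squnion> dual C A \<squnion> A) A"
    using tensor_in_Hom[OF coev_in_Hom ide_in_Hom, of A A] tensor_in_Hom[OF ide_in_Hom evm_in_Hom, of A A]
    by simp_all
  have "ide C (D \<squnion> A) \<otimes> evm C A = ide C D \<otimes> ide C A \<otimes> evm C A"
    and "(ide C D \<otimes> coev C A) \<otimes> ide C A = ide C D \<otimes> coev C A \<otimes> ide C A"
    using tensor_assoc[OF ide_in_Hom ide_in_Hom evm_in_Hom, of D A A]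
      tensor_assoc[OF ide_in_Hom coev_in_Hom ide_in_Hom, of D A A] by simp_all
  then show ?thesis using interchange[OF ide_in_Hom ide_in_Hom l r] zigzag[of A] by simp
qed

definition mate :: "'o \<Rightarrow> 'o \<Rightarrow> 'm \<Rightarrow> 'm" where
  "mate A B f = (evm C B \<otimes> ide C (dual C A)) \<cdot> (ide C (dual C B) \<otimes> f \<otimes> ide C (dual C A))
                \<cdot> (ide C (dual C B) \<otimes> coev C A)"

context
  fixes f A B
  assumes f: "f \<in> Hom C A B"
begin

private abbreviation "A' \<equiv> dual C A"
private abbreviation "B' \<equiv> dual C B"
private abbreviation "mate1 \<equiv> ide C B' \<otimes> coev C A"
private abbreviation "mate2 \<equiv> ide C B' \<otimes> f \<otimes> ide C A'"
private abbreviation "mate3 \<equiv> evm C B \<otimes> ide C A'"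

private lemma mate_factors_in_Hom:
  "mate1 \<in> Hom C B' (B' \<squnion> A \<squnion> A')"
  "mate2 \<in> Hom C (B' \<squnion> A \<squnion> A') (B' \<squnion> B \<squnion> A')"
  "mate3 \<in> Hom C (B' \<squnion> B \<squnion> A') A'"
  using tensor_in_Hom[OF ide_in_Hom coev_in_Hom, of B' A]
    tensor_in_Hom[OF ide_in_Hom tensor_in_Hom[OF f ide_in_Hom], of B' A']
    tensor_in_Hom[OF evm_in_Hom ide_in_Hom, of B A'] by simp_all

private lemma f_tensor_in_Hom: "f \<otimes> ide C A' \<in> Hom C (A \<squnion> A') (B \<squnion> A')"
  using tensor_in_Hom[OF f ide_in_Hom] .

lemma mate_in_Hom: "mate A B f \<in> Hom C B' A'"
  unfolding mate_def using mate_factors_in_Hom by (blast intro: comp_in_Hom)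

lemma coev_mate: "(f \<otimes> ide C A') \<cdot> coev C A = (ide C B \<otimes> mate A B f) \<cdot> coev C B"
proof -
  note a = mate_factors_in_Hom and fA = f_tensor_in_Hom
  define X1 X2 X3 where "X1 = ide C B \<otimes> mate1" and "X2 = ide C B \<otimes> mate2" and "X3 = ide C B \<otimes> mate3"
  have X1: "X1 \<in> Hom C (B \<squnion> B') (B \<squnion> B' \<squnion> A \<squnion> A')"
    and X2: "X2 \<in> Hom C (B \<squnion> B' \<squnion> A \<squnion> A') (B \<squnion> B' \<squnion> B \<squnion> A')"
    and X3: "X3 \<in> Hom C (B \<squnion> B' \<squnion> B \<squnion> A') (B \<squnion> A')"
    unfolding X1_def X2_def X3_def using tensor_in_Hom[OF ide_in_Hom a(1), of B]
      tensor_in_Hom[OF ide_in_Hom a(2), of B] tensor_in_Hom[OF ide_in_Hom a(3), of B] by simp_all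
  define Y1 Y2 where "Y1 = coev C B \<otimes> ide C (A \<squnion> A')" and "Y2 = coev C B \<otimes> ide C (B \<squnion> A')"
  have Y1: "Y1 \<in> Hom C (A \<squnion> A') (B \<squnion> B' \<squnion> A \<squnion> A')"
    and Y2: "Y2 \<in> Hom C (B \<squnion> A') (B \<squnion> B' \<squnion> B \<squnion> A')"
    unfolding Y1_def Y2_def using tensor_in_Hom[OF coev_in_Hom ide_in_Hom, of B] by simp_all
  have "ide C B \<otimes> mate A B f = X3 \<cdot> X2 \<cdot> X1"
    unfolding mate_def X1_def X2_def X3_def
    using ide_tensor_comp[OF comp_in_Hom[OF a(1,2)] a(3)] ide_tensor_comp[OF a(1,2)] by simp
  then have "(ide C B \<otimes> mate A B f) \<cdot> coev C B = X3 \<cdot> X2 \<cdot> X1 \<cdot> coev C B"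
    using comp_assoc[OF coev_in_Hom X1 X2] comp_assoc[OF coev_in_Hom comp_in_Hom[OF X1 X2] X3]
      comp_assoc[OF X1 X2 X3] by simp
  also have "X1 \<cdot> coev C B = Y1 \<cdot> coev C A"
    using tensor_slide[OF coev_in_Hom[of B] coev_in_Hom[of A]] tensor_unit[OF coev_in_Hom]
      tensor_assoc[OF ide_in_Hom ide_in_Hom coev_in_Hom, of B B' A] X1_def Y1_def by simp
  also have "X3 \<cdot> X2 \<cdot> Y1 \<cdot> coev C A = X3 \<cdot> (X2 \<cdot> Y1) \<cdot> coev C A"
    using comp_assoc[OF coev_in_Hom Y1 X2] by simp
  also have "X2 \<cdot> Y1 = Y2 \<cdot> (f \<otimes> ide C A')"
    using tensor_slide[OF coev_in_Hom[of B] fA] tensor_unit(1)[OF fA]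
      tensor_assoc[OF ide_in_Hom ide_in_Hom fA, of B B'] X2_def Y1_def Y2_def by simp
  also have "X3 \<cdot> (Y2 \<cdot> (f \<otimes> ide C A')) \<cdot> coev C A = (X3 \<cdot> Y2) \<cdot> (f \<otimes> ide C A') \<cdot> coev C A"
    using comp_assoc[OF coev_in_Hom fA Y2] comp_assoc[OF comp_in_Hom[OF coev_in_Hom fA] Y2 X3] by simp
  also have "X3 \<cdot> Y2 = ide C (B \<squnion> A')"
    using zigzag_tensor_right[of B A'] X3_def Y2_def by simp
  finally show ?thesis using comp_ide_left[OF comp_in_Hom[OF coev_in_Hom fA]] by simp
qed

lemma evm_mate: "evm C A \<cdot> (mate A B f \<otimes> ide C A) = evm C B \<cdot> (ide C B' \<otimes> f)"
proof -
  note a = mate_factors_in_Hom and fA = f_tensor_in_Hom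
  define Z1 Z2 Z3 where "Z1 = mate1 \<otimes> ide C A" and "Z2 = mate2 \<otimes> ide C A" and "Z3 = mate3 \<otimes> ide C A"
  have Z1: "Z1 \<in> Hom C (B' \<squnion> A) (B' \<squnion> A \<squnion> A' \<squnion> A)"
    and Z2: "Z2 \<in> Hom C (B' \<squnion> A \<squnion> A' \<squnion> A) (B' \<squnion> B \<squnion> A' \<squnion> A)"
    and Z3: "Z3 \<in> Hom C (B' \<squnion> B \<squnion> A' \<squnion> A) (A' \<squnion> A)"
    unfolding Z1_def Z2_def Z3_def using tensor_in_Hom[OF a(1) ide_in_Hom, of A]
      tensor_in_Hom[OF a(2) ide_in_Hom, of A] tensor_in_Hom[OF a(3) ide_in_Hom, of A] by simp_all
  define h where "h = ide C B' \<otimes> f"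
  have h: "h \<in> Hom C (B' \<squnion> A) (B' \<squnion> B)" using tensor_in_Hom[OF ide_in_Hom f, of B'] by (simp add: h_def)
  define W1 W2 where "W1 = ide C (B' \<squnion> B) \<otimes> evm C A" and "W2 = ide C (B' \<squnion> A) \<otimes> evm C A"
  have W1: "W1 \<in> Hom C (B' \<squnion> B \<squnion> A' \<squnion> A) (B' \<squnion> B)"
    and W2: "W2 \<in> Hom C (B' \<squnion> A \<squnion> A' \<squnion> A) (B' \<squnion> A)"
    unfolding W1_def W2_def using tensor_in_Hom[OF ide_in_Hom evm_in_Hom, of "B' \<squnion> B" A]
      tensor_in_Hom[OF ide_in_Hom evm_in_Hom, of "B' \<squnion> A" A] by simp_all
  have Z2_eq: "Z2 = h \<otimes> ide C (A' \<squnion> A)"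
    unfolding Z2_def h_def using tensor_assoc[OF ide_in_Hom fA ide_in_Hom, of B' A]
      tensor_assoc[OF f ide_in_Hom ide_in_Hom, of A' A] tensor_assoc[OF ide_in_Hom f ide_in_Hom, of B' "A' \<squnion> A"]
    by simp
  have "mate A B f \<otimes> ide C A = Z3 \<cdot> Z2 \<cdot> Z1"
    unfolding mate_def Z1_def Z2_def Z3_def
    using comp_tensor_ide[OF comp_in_Hom[OF a(1,2)] a(3)] comp_tensor_ide[OF a(1,2)] by simp
  then have "evm C A \<cdot> (mate A B f \<otimes> ide C A) = (evm C A \<cdot> Z3) \<cdot> Z2 \<cdot> Z1"
    using comp_assoc[OF comp_in_Hom[OF Z1 Z2] Z3 evm_in_Hom] by simp
  also have "evm C A \<cdot> Z3 = evm C B \<cdot> W1"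
    using tensor_slide[OF evm_in_Hom[of B] evm_in_Hom[of A]] tensor_unit[OF evm_in_Hom]
      tensor_assoc[OF evm_in_Hom ide_in_Hom ide_in_Hom, of B A' A] Z3_def W1_def by simp
  also have "(evm C B \<cdot> W1) \<cdot> Z2 \<cdot> Z1 = evm C B \<cdot> (W1 \<cdot> Z2) \<cdot> Z1"
    using comp_assoc[OF Z1 Z2 W1] comp_assoc[OF comp_in_Hom[OF Z1 Z2] W1 evm_in_Hom] by simp
  also have "W1 \<cdot> Z2 = h \<cdot> W2"
    using tensor_slide[OF h evm_in_Hom[of A]] tensor_unit(2)[OF h] Z2_eq W1_def W2_def by simp
  also have "evm C B \<cdot> (h \<cdot> W2) \<cdot> Z1 = evm C B \<cdot> h \<cdot> W2 \<cdot> Z1"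
    using comp_assoc[OF Z1 W2 h] by simp
  also have "W2 \<cdot> Z1 = ide C (B' \<squnion> A)"
    using zigzag_tensor_left[of B' A] W2_def Z1_def by simp
  finally show ?thesis using comp_ide_right[OF h] h_def by simp
qed

end

lemma tr_in_Hom: "f \<in> Hom C W W \<Longrightarrow> tr C W f \<in> Hom C \<I> \<I>"
  unfolding tr_def using tensor_in_Hom[OF _ ide_in_Hom, of f W W "dual C W"]
  by (blast intro: comp_in_Hom coev_in_Hom braid_in_Hom evm_in_Hom)

theorem tr_commute:
  assumes f: "f \<in> Hom C A B" and g: "g \<in> Hom C B A"
  shows "tr C A (g \<cdot> f) = tr C B (f \<cdot> g)"
proof -
  let ?A' = "dual C A" and ?B' = "dual C B" and ?f' = "mate A B f"
  have f': "?f' \<in> Hom C ?B' ?A'" by (rule mate_in_Hom[OF f])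
  have gA: "g \<otimes> ide C ?A' \<in> Hom C (B \<squnion> ?A') (A \<squnion> ?A')"
    and fA: "f \<otimes> ide C ?A' \<in> Hom C (A \<squnion> ?A') (B \<squnion> ?A')"
    and gB: "g \<otimes> ide C ?B' \<in> Hom C (B \<squnion> ?B') (A \<squnion> ?B')"
    and fB: "f \<otimes> ide C ?B' \<in> Hom C (A \<squnion> ?B') (B \<squnion> ?B')"
    and Bf': "ide C B \<otimes> ?f' \<in> Hom C (B \<squnion> ?B') (B \<squnion> ?A')"
    and Af': "ide C A \<otimes> ?f' \<in> Hom C (A \<squnion> ?B') (A \<squnion> ?A')"
    and f'A: "?f' \<otimes> ide C A \<in> Hom C (?B' \<squnion> A) (?A' \<squnion> A)"
    and B'f: "ide C ?B' \<otimes> f \<in> Hom C (?B' \<squnion> A) (?B' \<squnion> B)"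
    using tensor_in_Hom[OF g ide_in_Hom] tensor_in_Hom[OF f ide_in_Hom] tensor_in_Hom[OF ide_in_Hom f']
      tensor_in_Hom[OF f' ide_in_Hom] tensor_in_Hom[OF ide_in_Hom f] by simp_all
  have gB_coev: "(g \<otimes> ide C ?B') \<cdot> coev C B \<in> Hom C \<I> (A \<squnion> ?B')"
    using comp_in_Hom[OF coev_in_Hom gB] .
  have "tr C A (g \<cdot> f) = evm C A \<cdot> braid C A ?A' \<cdot> ((g \<otimes> ide C ?A') \<cdot> (f \<otimes> ide C ?A')) \<cdot> coev C A"
    unfolding tr_def using comp_tensor_ide[OF f g] by simp
  also have "\<dots> = evm C A \<cdot> braid C A ?A' \<cdot> (g \<otimes> ide C ?A') \<cdot> (ide C B \<otimes> ?f') \<cdot> coev C B"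
    using comp_assoc[OF coev_in_Hom fA gA] coev_mate[OF f] by simp
  also have "\<dots> = evm C A \<cdot> braid C A ?A' \<cdot> (ide C A \<otimes> ?f') \<cdot> (g \<otimes> ide C ?B') \<cdot> coev C B"
    using comp_assoc[OF coev_in_Hom Bf' gA] comp_assoc[OF coev_in_Hom gB Af'] tensor_slide[OF g f'] by simp
  also have "\<dots> = evm C A \<cdot> (?f' \<otimes> ide C A) \<cdot> braid C A ?B' \<cdot> (g \<otimes> ide C ?B') \<cdot> coev C B"
    using comp_assoc[OF gB_coev Af' braid_in_Hom] comp_assoc[OF gB_coev braid_in_Hom f'A]
      braid_natural[OF ide_in_Hom f', of A] by simp
  also have "\<dots> = evm C B \<cdot> (ide C ?B' \<otimes> f) \<cdot> braid C A ?B' \<cdot> (g \<otimes> ide C ?B') \<cdot> coev C B"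
    using comp_assoc[OF comp_in_Hom[OF gB_coev braid_in_Hom] f'A evm_in_Hom]
      comp_assoc[OF comp_in_Hom[OF gB_coev braid_in_Hom] B'f evm_in_Hom] evm_mate[OF f] by simp
  also have "\<dots> = evm C B \<cdot> braid C B ?B' \<cdot> (f \<otimes> ide C ?B') \<cdot> (g \<otimes> ide C ?B') \<cdot> coev C B"
    using comp_assoc[OF gB_coev braid_in_Hom B'f] comp_assoc[OF gB_coev fB braid_in_Hom]
      braid_natural[OF f ide_in_Hom, of ?B'] by simp
  also have "\<dots> = tr C B (f \<cdot> g)"
    unfolding tr_def using comp_tensor_ide[OF g f] comp_assoc[OF coev_in_Hom gB fB] by simp
  finally show ?thesis .
qed

lemma braid_unit: "braid C A \<I> = ide C A" "braid C \<I> A = ide C A"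
proof -
  have b: "braid C A \<I> \<in> Hom C A A" "braid C \<I> A \<in> Hom C A A"
    using braid_in_Hom[of A \<I>] braid_in_Hom[of \<I> A] by simp_all
  have idem: "braid C A \<I> = braid C A \<I> \<cdot> braid C A \<I>"
    using braid_hexagon[of A \<I> \<I>] tensor_unit[OF b(1)] by simp
  have inv: "braid C \<I> A \<cdot> braid C A \<I> = ide C A" using braid_inverse[of \<I> A] by simp
  have "braid C A \<I> = (braid C \<I> A \<cdot> braid C A \<I>) \<cdot> braid C A \<I>" using inv comp_ide_left[OF b(1)] by simp
  also have "\<dots> = ide C A" using comp_assoc[OF b(1) b(1) b(2)] idem inv by simp
  finally show "braid C A \<I> = ide C A" .
  then show "braid C \<I> A = ide C A" using inv comp_ide_right[OF b(2)] by simp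
qed

lemma tr_unit: assumes s: "s \<in> Hom C \<I> \<I>" shows "tr C \<I> s = s"
proof -
  let ?U' = "dual C \<I>"
  have coev: "coev C \<I> \<in> Hom C \<I> ?U'" and evm: "evm C \<I> \<in> Hom C ?U' \<I>"
    using coev_in_Hom[of \<I>] evm_in_Hom[of \<I>] by simp_all
  have sU: "s \<otimes> ide C ?U' \<in> Hom C ?U' ?U'" using tensor_in_Hom[OF s ide_in_Hom, of ?U'] by simp
  have slide: "(s \<otimes> ide C ?U') \<cdot> coev C \<I> = coev C \<I> \<cdot> s"
    using tensor_decompose1[OF s coev] tensor_decompose2[OF s coev] tensor_unit(1)[OF coev]
      tensor_unit(2)[OF s] by simp
  have evm_coev: "evm C \<I> \<cdot> coev C \<I> = ide C \<I>"
    using zigzag[of \<I>] tensor_unit(1)[OF evm] tensor_unit(2)[OF coev] by simp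
  have "tr C \<I> s = evm C \<I> \<cdot> coev C \<I> \<cdot> s"
    unfolding tr_def using braid_unit(2)[of ?U'] comp_ide_left[OF comp_in_Hom[OF coev sU]] slide by simp
  also have "\<dots> = s" using comp_assoc[OF s coev evm] evm_coev comp_ide_left[OF s] by simp
  finally show ?thesis .
qed

lemma tr_rank_one: "a \<in> Hom C \<I> W \<Longrightarrow> b \<in> Hom C W \<I> \<Longrightarrow> tr C W (a \<cdot> b) = b \<cdot> a"
  using tr_commute[of b W \<I> a] tr_unit comp_in_Hom by metis

lemma tr_add: assumes f: "f \<in> Hom C W W" and g: "g \<in> Hom C W W"
  shows "tr C W (f \<oplus> g) = tr C W f \<oplus> tr C W g"
proof -
  let ?W' = "dual C W"
  have fW: "f \<otimes> ide C ?W' \<in> Hom C (W \<squnion> ?W') (W \<squnion> ?W')"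
    and gW: "g \<otimes> ide C ?W' \<in> Hom C (W \<squnion> ?W') (W \<squnion> ?W')"
    using tensor_in_Hom[OF f ide_in_Hom] tensor_in_Hom[OF g ide_in_Hom] by simp_all
  show ?thesis unfolding tr_def
    using tensor_add_left[OF f g ide_in_Hom, of ?W'] comp_add_left[OF coev_in_Hom fW gW]
      comp_add_right[OF comp_in_Hom[OF coev_in_Hom fW] comp_in_Hom[OF coev_in_Hom gW] braid_in_Hom]
      comp_add_right[OF comp_in_Hom[OF comp_in_Hom[OF coev_in_Hom fW] braid_in_Hom]
        comp_in_Hom[OF comp_in_Hom[OF coev_in_Hom gW] braid_in_Hom] evm_in_Hom]
    by simp
qed

lemma tr_smult: assumes f: "f \<in> Hom C W W" shows "tr C W (a \<star> f) = a \<star> tr C W f"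
proof -
  have fW: "f \<otimes> ide C (dual C W) \<in> Hom C (W \<squnion> dual C W) (W \<squnion> dual C W)"
    using tensor_in_Hom[OF f ide_in_Hom] by simp
  show ?thesis unfolding tr_def
    using tensor_smult_left[OF f ide_in_Hom, of a "dual C W"] comp_smult_left[OF coev_in_Hom fW]
      comp_smult_right[OF comp_in_Hom[OF coev_in_Hom fW] braid_in_Hom]
      comp_smult_right[OF comp_in_Hom[OF comp_in_Hom[OF coev_in_Hom fW] braid_in_Hom] evm_in_Hom]
    by simp
qed

end

section \<open>The trace pairing\<close>

locale evaluated_cat =
  fixes C :: "('o, 'm, 'k::comm_ring_1) lincat" and ev :: "'m \<Rightarrow> 'k"
  assumes setting: "setting C ev"
begin

sublocale linear_rigid_symmetric_cat C
  using setting unfolding setting_def by unfold_locales auto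

lemma ev_add: "f \<in> Hom C \<I> \<I> \<Longrightarrow> g \<in> Hom C \<I> \<I> \<Longrightarrow> ev (f \<oplus> g) = ev f + ev g"
  using setting unfolding setting_def by simp
lemma ev_smult: "f \<in> Hom C \<I> \<I> \<Longrightarrow> ev (a \<star> f) = a * ev f"
  using setting unfolding setting_def by simp

abbreviation pair :: "'o \<Rightarrow> 'm \<Rightarrow> 'm \<Rightarrow> 'k" where "pair W S f \<equiv> pairing C ev W S f"

lemma pairing_add_right:
  assumes "f \<in> Hom C W W'" "g \<in> Hom C W W'" "S \<in> Hom C W' W"
  shows "pair W S (f \<oplus> g) = pair W S f + pair W S g"
  using assms unfolding pairing_def
  by (simp add: comp_add_right tr_add comp_in_Hom ev_add tr_in_Hom)

lemma pairing_smult_right: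
  assumes "f \<in> Hom C W W'" "S \<in> Hom C W' W"
  shows "pair W S (a \<star> f) = a * pair W S f"
  using assms unfolding pairing_def
  by (simp add: comp_smult_right tr_smult comp_in_Hom ev_smult tr_in_Hom)

lemma pairing_msum_right:
  "S \<in> Hom C W' W \<Longrightarrow> set xs \<subseteq> Hom C W W' \<Longrightarrow> pair W S (msum C W W' xs) = sum_list (map (pair W S) xs)"
  using additive_msum[where L = "pair W S"] pairing_add_right
    pairing_smult_right[OF zero_in_Hom, where a = 0] smult_zero[OF zero_in_Hom] by simp

lemma pairing_lincomb_right:
  "S \<in> Hom C W' W \<Longrightarrow> set bs \<subseteq> Hom C W W' \<Longrightarrow> length cs = length bs \<Longrightarrow>
   pair W S (lincomb C W W' cs bs) = (\<Sum>t<length bs. cs ! t * pair W S (bs ! t))"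
  by (rule linear_lincomb) (auto simp: pairing_add_right pairing_smult_right)

lemma pairing_comp_left:
  "f \<in> Hom C W W' \<Longrightarrow> h \<in> Hom C W' W'' \<Longrightarrow> S \<in> Hom C W'' W \<Longrightarrow> pair W S (h \<cdot> f) = pair W (S \<cdot> h) f"
  unfolding pairing_def by (simp add: comp_assoc)

lemma pairing_comp_right:
  assumes f: "f \<in> Hom C W W'" and h: "h \<in> Hom C V W" and S: "S \<in> Hom C W' V"
  shows "pair V S (f \<cdot> h) = pair W (h \<cdot> S) f"
proof -
  have "tr C V (S \<cdot> f \<cdot> h) = tr C V ((S \<cdot> f) \<cdot> h)" using comp_assoc[OF h f S] by simp
  also have "\<dots> = tr C W (h \<cdot> S \<cdot> f)" using tr_commute[OF h comp_in_Hom[OF f S]] .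
  finally show ?thesis unfolding pairing_def using comp_assoc[OF f S h] by simp
qed

lemma pairing_commute: "S \<in> Hom C W' W \<Longrightarrow> f \<in> Hom C W W' \<Longrightarrow> pair W S f = pair W' f S"
  unfolding pairing_def using tr_commute[of f W W' S] by simp

lemma pairing_through_unit:
  assumes g: "g \<in> Hom C \<I> V" and f: "f \<in> Hom C W \<I>" and S: "S \<in> Hom C V W"
  shows "pair W S (g \<cdot> f) = ev (f \<cdot> S \<cdot> g)"
  unfolding pairing_def
  using comp_assoc[OF f g S] tr_rank_one[OF comp_in_Hom[OF g S] f] by simp

lemma pairing_at_unit: "b \<in> Hom C W \<I> \<Longrightarrow> y \<in> Hom C \<I> W \<Longrightarrow> pair \<I> b y = ev (b \<cdot> y)"
  unfolding pairing_def using tr_unit comp_in_Hom by metis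

lemma eq1_iff_pairing:
  assumes f: "f \<in> Hom C W W'" and g: "g \<in> Hom C W W'"
  shows "eq1 C ev W W' f g \<longleftrightarrow> (\<forall>S\<in>Hom C W' W. pair W S f = pair W S g)"
proof -
  have "eq1 C ev W W' f g \<longleftrightarrow> (\<forall>S\<in>Hom C W' W. pair W S (f \<oplus> (-1) \<star> g) = 0)"
    using f g unfolding eq1_def I1_def by simp
  also have "\<dots> \<longleftrightarrow> (\<forall>S\<in>Hom C W' W. pair W S f = pair W S g)"
    using f g by (simp add: pairing_add_right pairing_smult_right)
  finally show ?thesis .
qed

lemma eq1_imp_ev_eq:
  assumes "s \<in> Hom C \<I> \<I>" "t \<in> Hom C \<I> \<I>" "eq1 C ev \<I> \<I> s t"
  shows "ev s = ev t"
proof -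
  have "pair \<I> (ide C \<I>) u = ev u" if "u \<in> Hom C \<I> \<I>" for u
    using that pairing_at_unit[OF ide_in_Hom] comp_ide_left by metis
  then show ?thesis using assms eq1_iff_pairing[of s \<I> \<I> t] ide_in_Hom by metis
qed

lemma pairing_msum_upt:
  assumes "S \<in> Hom C W' W" and "\<And>k. k < m \<Longrightarrow> F k \<in> Hom C W W'"
  shows "pair W S (msum C W W' (map F [0..<m])) = (\<Sum>k<m. pair W S (F k))"
  using assms pairing_msum_right[of S W' W "map F [0..<m]"]
  by (auto simp: interv_sum_list_conv_sum_set_nat atLeast0LessThan)

lemma ev_zero: "ev (mzero C \<I> \<I>) = 0"
  using ev_smult[OF zero_in_Hom, of 0] smult_zero[OF zero_in_Hom] by simp

lemma dual1_eq1:
  assumes \<phi>: "\<phi> \<in> dual1 C ev W V" and f: "f \<in> Hom C W V" and g: "g \<in> Hom C W V"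
    and eq: "eq1 C ev W V f g"
  shows "\<phi> f = \<phi> g"
proof -
  have "\<phi> (f \<oplus> (-1) \<star> g) = 0" using \<phi> eq unfolding dual1_def eq1_def by blast
  moreover have "\<phi> (f \<oplus> (-1) \<star> g) = \<phi> f - \<phi> g" using \<phi> f g unfolding dual1_def by simp
  ultimately show ?thesis by simp
qed

theorem eq1_if_rank_one_pairings_eq:
  assumes M': "propM' C ev" and Y: "Y \<in> Hom C W W'" and Y': "Y' \<in> Hom C W W'"
    and rank_one: "\<And>a b. a \<in> Hom C \<I> W \<Longrightarrow> b \<in> Hom C W' \<I> \<Longrightarrow> pair W (a \<cdot> b) Y = pair W (a \<cdot> b) Y'"
  shows "eq1 C ev W W' Y Y'"
proof -
  have "pair W S Y = pair W S Y'" if S: "S \<in> Hom C W' W" for S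
  proof -
    obtain ps where ps: "\<forall>(a, b)\<in>set ps. a \<in> Hom C \<I> W \<and> b \<in> Hom C W' \<I>"
      and S_eq: "eq1 C ev W' W S (msum C W' W (map (\<lambda>(a, b). a \<cdot> b) ps))"
      using M' S unfolding propM'_def by blast
    define ts where "ts = map (\<lambda>(a, b). a \<cdot> b) ps"
    have ts: "set ts \<subseteq> Hom C W' W" using ps unfolding ts_def by (auto intro: comp_in_Hom[where B = \<I>])
    have expand: "pair W S Z = sum_list (map (\<lambda>t. pair W t Z) ts)" if Z: "Z \<in> Hom C W W'" for Z
    proof -
      have "pair W S Z = pair W' Z S" by (rule pairing_commute[OF S Z])
      also have "\<dots> = pair W' Z (msum C W' W ts)"
        using S_eq eq1_iff_pairing[OF S msum_in_Hom[OF ts]] Z unfolding ts_def by blast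
      also have "\<dots> = sum_list (map (pair W' Z) ts)" by (rule pairing_msum_right[OF Z ts])
      also have "\<dots> = sum_list (map (\<lambda>t. pair W t Z) ts)"
        using ts Z by (intro arg_cong[where f = sum_list] map_cong refl) (metis pairing_commute subsetD)
      finally show ?thesis .
    qed
    have "map (\<lambda>t. pair W t Y) ts = map (\<lambda>t. pair W t Y') ts"
      using rank_one ps unfolding ts_def by auto
    then show ?thesis by (simp only: expand[OF Y] expand[OF Y'])
  qed
  then show ?thesis using Y Y' eq1_iff_pairing by blast
qed

section \<open>Biproducts of the unit object\<close>

definition unit_biproduct :: "'o \<Rightarrow> nat \<Rightarrow> (nat \<Rightarrow> 'm) \<Rightarrow> (nat \<Rightarrow> 'm) \<Rightarrow> bool" where
  "unit_biproduct W m p i \<longleftrightarrow>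
     (\<forall>k<m. p k \<in> Hom C W \<I> \<and> i k \<in> Hom C \<I> W) \<and>
     (\<forall>k<m. \<forall>l<m. eq1 C ev \<I> \<I> (p k \<cdot> i l) (if k = l then ide C \<I> else mzero C \<I> \<I>)) \<and>
     eq1 C ev W W (msum C W W (map (\<lambda>k. i k \<cdot> p k) [0..<m])) (ide C W)"

lemma biproduct_of_units1_iff: "biproduct_of_units1 C ev W m \<longleftrightarrow> (\<exists>p i. unit_biproduct W m p i)"
proof
  assume "biproduct_of_units1 C ev W m"
  then obtain fs gs where "length fs = m" "length gs = m" "set fs \<subseteq> Hom C W \<I>" "set gs \<subseteq> Hom C \<I> W"
    "\<forall>k<m. \<forall>l<m. eq1 C ev \<I> \<I> (fs ! k \<cdot> gs ! l) (if k = l then ide C \<I> else mzero C \<I> \<I>)"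
    "eq1 C ev W W (msum C W W (map2 (cmp C) gs fs)) (ide C W)"
    unfolding biproduct_of_units1_def by blast
  moreover from calculation have "map2 (cmp C) gs fs = map (\<lambda>k. gs ! k \<cdot> fs ! k) [0..<m]"
    by (intro nth_equalityI) auto
  ultimately have "unit_biproduct W m (nth fs) (nth gs)"
    unfolding unit_biproduct_def by auto
  then show "\<exists>p i. unit_biproduct W m p i" by blast
next
  assume "\<exists>p i. unit_biproduct W m p i"
  then obtain p i where "unit_biproduct W m p i" by blast
  moreover have "map2 (cmp C) (map i [0..<m]) (map p [0..<m]) = map (\<lambda>k. i k \<cdot> p k) [0..<m]"
    by (simp add: zip_map_map zip_same_conv_map)
  ultimately show "biproduct_of_units1 C ev W m"
    unfolding unit_biproduct_def biproduct_of_units1_def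
    by (intro exI[of _ "map p [0..<m]"] exI[of _ "map i [0..<m]"]) auto
qed

context
  fixes W m p i
  assumes bip: "unit_biproduct W m p i"
begin

lemma unit_biproduct_in_Hom: "k < m \<Longrightarrow> p k \<in> Hom C W \<I>" "k < m \<Longrightarrow> i k \<in> Hom C \<I> W"
  using bip unfolding unit_biproduct_def by auto

lemma unit_biproduct_idempotent_in_Hom: "k < m \<Longrightarrow> i k \<cdot> p k \<in> Hom C W W"
  using unit_biproduct_in_Hom by (blast intro: comp_in_Hom)

lemma pairing_ide_expand:
  assumes T: "T \<in> Hom C W W" shows "pair W T (ide C W) = (\<Sum>k<m. pair W T (i k \<cdot> p k))"
proof -
  have "eq1 C ev W W (msum C W W (map (\<lambda>k. i k \<cdot> p k) [0..<m])) (ide C W)"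
    using bip unfolding unit_biproduct_def by blast
  moreover have "msum C W W (map (\<lambda>k. i k \<cdot> p k) [0..<m]) \<in> Hom C W W"
    using unit_biproduct_idempotent_in_Hom by (rule msum_upt_in_Hom)
  ultimately have "pair W T (msum C W W (map (\<lambda>k. i k \<cdot> p k) [0..<m])) = pair W T (ide C W)"
    using T eq1_iff_pairing[OF _ ide_in_Hom] by blast
  then show ?thesis using pairing_msum_upt[OF T unit_biproduct_idempotent_in_Hom] by simp
qed

lemma pairing_expand_source:
  assumes Z: "Z \<in> Hom C W W'" and S: "S \<in> Hom C W' W"
  shows "pair W S Z = (\<Sum>k<m. pair W S (Z \<cdot> i k \<cdot> p k))"
proof -
  have "pair W S Z = pair W (S \<cdot> Z) (ide C W)"
    using pairing_comp_left[OF ide_in_Hom Z S] comp_ide_right[OF Z] by simp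
  also have "\<dots> = (\<Sum>k<m. pair W S (Z \<cdot> i k \<cdot> p k))"
    using pairing_ide_expand[OF comp_in_Hom[OF Z S]] unit_biproduct_idempotent_in_Hom
      pairing_comp_left[OF _ Z S] by simp
  finally show ?thesis .
qed

lemma pairing_expand_target:
  assumes Z: "Z \<in> Hom C V W" and S: "S \<in> Hom C W V"
  shows "pair V S Z = (\<Sum>k<m. pair V S (i k \<cdot> p k \<cdot> Z))"
proof -
  have "pair V S Z = pair W (Z \<cdot> S) (ide C W)"
    using pairing_comp_right[OF ide_in_Hom Z S] comp_ide_left[OF Z] by simp
  also have "\<dots> = (\<Sum>k<m. pair V S ((i k \<cdot> p k) \<cdot> Z))"
    using pairing_ide_expand[OF comp_in_Hom[OF S Z]] unit_biproduct_idempotent_in_Hom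
      pairing_comp_right[OF _ Z S] by simp
  also have "\<dots> = (\<Sum>k<m. pair V S (i k \<cdot> p k \<cdot> Z))"
    using comp_assoc[OF Z unit_biproduct_in_Hom] by (intro sum.cong) auto
  finally show ?thesis .
qed

end

theorem propA_imp_propM': assumes "propA C ev" shows "propM' C ev"
  unfolding propM'_def
proof (intro allI ballI)
  fix W V \<Sigma> assume \<Sigma>: "\<Sigma> \<in> Hom C W V"
  obtain n p i where bip: "unit_biproduct V n p i"
    using assms biproduct_of_units1_iff unfolding propA_def by blast
  note in_Hom = unit_biproduct_in_Hom[OF bip]
  define ps where "ps = map (\<lambda>k. (i k, p k \<cdot> \<Sigma>)) [0..<n]"
  have terms: "i k \<cdot> p k \<cdot> \<Sigma> \<in> Hom C W V" if "k < n" for k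
    using that in_Hom \<Sigma> by (blast intro: comp_in_Hom)
  have "msum C W V (map (\<lambda>k. i k \<cdot> p k \<cdot> \<Sigma>) [0..<n]) \<in> Hom C W V"
    using terms by (rule msum_upt_in_Hom)
  then have "eq1 C ev W V \<Sigma> (msum C W V (map (\<lambda>k. i k \<cdot> p k \<cdot> \<Sigma>) [0..<n]))"
    using \<Sigma> pairing_expand_target[OF bip \<Sigma>] pairing_msum_upt[OF _ terms] by (simp add: eq1_iff_pairing)
  moreover have "\<forall>(a, b)\<in>set ps. a \<in> Hom C \<I> V \<and> b \<in> Hom C W \<I>"
    unfolding ps_def using in_Hom \<Sigma> by (auto intro: comp_in_Hom)
  moreover have "map (\<lambda>(a, b). a \<cdot> b) ps = map (\<lambda>k. i k \<cdot> p k \<cdot> \<Sigma>) [0..<n]"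
    unfolding ps_def by simp
  ultimately show "\<exists>ps. (\<forall>(a, b)\<in>set ps. a \<in> Hom C \<I> V \<and> b \<in> Hom C W \<I>) \<and>
      eq1 C ev W V \<Sigma> (msum C W V (map (\<lambda>(a, b). a \<cdot> b) ps))"
    by (intro exI[of _ ps]) simp
qed

section \<open>Dual bases\<close>

definition basis1 :: "'o \<Rightarrow> 'o \<Rightarrow> 'm list \<Rightarrow> bool" where
  "basis1 W V bs \<longleftrightarrow> set bs \<subseteq> Hom C W V \<and>
     (\<forall>\<Sigma>\<in>Hom C W V. \<exists>cs. length cs = length bs \<and> eq1 C ev W V \<Sigma> (lincomb C W V cs bs)) \<and>
     (\<forall>cs. length cs = length bs \<and> lincomb C W V cs bs \<in> I1 C ev W V \<longrightarrow> (\<forall>c\<in>set cs. c = 0))"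

lemma free_finite_rank1_iff: "free_finite_rank1 C ev W V \<longleftrightarrow> (\<exists>bs. basis1 W V bs)"
  unfolding free_finite_rank1_def basis1_def ..

definition dual_bases :: "'o \<Rightarrow> 'o \<Rightarrow> 'i list \<Rightarrow> ('i \<Rightarrow> 'm) \<Rightarrow> ('i \<Rightarrow> 'm) \<Rightarrow> bool" where
  "dual_bases W V P b d \<longleftrightarrow> distinct P \<and>
     (\<forall>x\<in>set P. b x \<in> Hom C W V \<and> d x \<in> Hom C V W) \<and>
     (\<forall>x\<in>set P. \<forall>y\<in>set P. pair W (d x) (b y) = (if x = y then 1 else 0)) \<and>
     (\<forall>\<Sigma>\<in>Hom C W V. \<forall>X\<in>Hom C V W. pair W X \<Sigma> = (\<Sum>x\<in>set P. pair W (d x) \<Sigma> * pair W X (b x)))"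

context
  fixes W V :: 'o and P :: "'i list" and b d :: "'i \<Rightarrow> 'm"
  assumes dual_bases: "dual_bases W V P b d"
begin

lemma dual_bases_distinct: "distinct P"
  and dual_bases_in_Hom: "x \<in> set P \<Longrightarrow> b x \<in> Hom C W V" "x \<in> set P \<Longrightarrow> d x \<in> Hom C V W"
  and dual_bases_dual: "x \<in> set P \<Longrightarrow> y \<in> set P \<Longrightarrow> pair W (d x) (b y) = (if x = y then 1 else 0)"
  and dual_bases_expand: "\<Sigma> \<in> Hom C W V \<Longrightarrow> X \<in> Hom C V W \<Longrightarrow>
                   pair W X \<Sigma> = (\<Sum>x\<in>set P. pair W (d x) \<Sigma> * pair W X (b x))"
  using dual_bases unfolding dual_bases_def by blast+

lemma dual_basis_in_Hom: "set (map b P) \<subseteq> Hom C W V"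
  using dual_bases_in_Hom by auto

lemma pairing_dual_basis_lincomb:
  "X \<in> Hom C V W \<Longrightarrow> pair W X (lincomb C W V (map c P) (map b P)) = (\<Sum>x\<in>set P. c x * pair W X (b x))"
  by (rule linear_lincomb_distinct) (auto simp: pairing_add_right pairing_smult_right dual_bases_distinct
      dual_bases_in_Hom)

lemma dual_basis_span:
  assumes \<Sigma>: "\<Sigma> \<in> Hom C W V"
  shows "eq1 C ev W V \<Sigma> (lincomb C W V (map (\<lambda>x. pair W (d x) \<Sigma>) P) (map b P))"
  using \<Sigma> lincomb_in_Hom[OF dual_basis_in_Hom] dual_bases_expand pairing_dual_basis_lincomb
  by (simp add: eq1_iff_pairing)

lemma dual_basis_independent:
  assumes len: "length cs = length P" and I1: "lincomb C W V cs (map b P) \<in> I1 C ev W V"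
    and t: "t < length P"
  shows "cs ! t = 0"
proof -
  have "0 = pair W (d (P ! t)) (lincomb C W V cs (map b P))"
    using I1 dual_bases_in_Hom(2)[OF nth_mem[OF t]] unfolding I1_def by simp
  also have "\<dots> = (\<Sum>t'<length P. cs ! t' * pair W (d (P ! t)) (b (P ! t')))"
    using pairing_lincomb_right[OF dual_bases_in_Hom(2)[OF nth_mem[OF t]] dual_basis_in_Hom] len by simp
  also have "\<dots> = (\<Sum>t'<length P. if t' = t then cs ! t' else 0)"
    using dual_bases_dual t nth_eq_iff_index_eq[OF dual_bases_distinct t] by (intro sum.cong) auto
  also have "\<dots> = cs ! t" using t by simp
  finally show ?thesis by simp
qed

lemma dual_basis_basis1: "basis1 W V (map b P)"
  unfolding basis1_def
proof (intro conjI ballI allI impI)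
  show "set (map b P) \<subseteq> Hom C W V" by (rule dual_basis_in_Hom)
next
  fix \<Sigma> assume "\<Sigma> \<in> Hom C W V"
  then show "\<exists>cs. length cs = length (map b P) \<and> eq1 C ev W V \<Sigma> (lincomb C W V cs (map b P))"
    using dual_basis_span by (intro exI[of _ "map (\<lambda>x. pair W (d x) \<Sigma>) P"]) simp
next
  fix cs c
  assume "length cs = length (map b P) \<and> lincomb C W V cs (map b P) \<in> I1 C ev W V" "c \<in> set cs"
  then show "c = 0" using dual_basis_independent by (auto simp: in_set_conv_nth)
qed

end

definition coords :: "'o \<Rightarrow> 'm list \<Rightarrow> 'm \<Rightarrow> 'k list" where
  "coords W bs a = (SOME cs. length cs = length bs \<and> eq1 C ev \<I> W a (lincomb C \<I> W cs bs))"

context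
  fixes W bs
  assumes basis: "basis1 \<I> W bs"
begin

lemma basis1_subset: "set bs \<subseteq> Hom C \<I> W"
  using basis unfolding basis1_def by blast

lemma basis1_in_Hom: "k < length bs \<Longrightarrow> bs ! k \<in> Hom C \<I> W"
  using basis1_subset nth_mem by blast

lemma coords:
  assumes a: "a \<in> Hom C \<I> W"
  shows "length (coords W bs a) = length bs" "eq1 C ev \<I> W a (lincomb C \<I> W (coords W bs a) bs)"
proof -
  have "\<exists>cs. length cs = length bs \<and> eq1 C ev \<I> W a (lincomb C \<I> W cs bs)"
    using basis a unfolding basis1_def by blast
  from someI_ex[OF this]
  show "length (coords W bs a) = length bs" "eq1 C ev \<I> W a (lincomb C \<I> W (coords W bs a) bs)"
    unfolding coords_def by simp_all
qed

lemma pairing_coords: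
  assumes a: "a \<in> Hom C \<I> W" and S: "S \<in> Hom C W \<I>"
  shows "pair \<I> S a = (\<Sum>k<length bs. coords W bs a ! k * pair \<I> S (bs ! k))"
  using coords[OF a] eq1_iff_pairing[OF a lincomb_in_Hom[OF basis1_subset]] S
    pairing_lincomb_right[OF S basis1_subset] by simp

lemma coords_unique:
  assumes a: "a \<in> Hom C \<I> W" and len: "length cs = length bs"
    and pairs: "\<And>S. S \<in> Hom C W \<I> \<Longrightarrow> pair \<I> S a = (\<Sum>k<length bs. cs ! k * pair \<I> S (bs ! k))"
  shows "coords W bs a = cs"
proof -
  define es where "es = map (\<lambda>k. coords W bs a ! k - cs ! k) [0..<length bs]"
  have "lincomb C \<I> W es bs \<in> I1 C ev \<I> W"
    unfolding I1_def
  proof (intro CollectI conjI ballI)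
    show "lincomb C \<I> W es bs \<in> Hom C \<I> W" by (rule lincomb_in_Hom[OF basis1_subset])
  next
    fix S assume S: "S \<in> Hom C W \<I>"
    have "pair \<I> S (lincomb C \<I> W es bs) = (\<Sum>k<length bs. (coords W bs a ! k - cs ! k) * pair \<I> S (bs ! k))"
      using pairing_lincomb_right[OF S basis1_subset, of es] unfolding es_def by simp
    also have "\<dots> = pair \<I> S a - pair \<I> S a"
      using pairing_coords[OF a S] pairs[OF S] by (simp add: left_diff_distrib sum_subtractf)
    finally show "pairing C ev \<I> S (lincomb C \<I> W es bs) = 0" by simp
  qed
  moreover have "length es = length bs" unfolding es_def by simp
  ultimately have "\<forall>e\<in>set es. e = 0" using basis unfolding basis1_def by blast
  then show ?thesis using coords(1)[OF a] len unfolding es_def by (intro nth_equalityI) auto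
qed

lemma coord_in_dual1: assumes k: "k < length bs" shows "(\<lambda>a. coords W bs a ! k) \<in> dual1 C ev \<I> W"
  unfolding dual1_def
proof (intro CollectI conjI ballI allI)
  fix f g assume f: "f \<in> Hom C \<I> W" and g: "g \<in> Hom C \<I> W"
  have "coords W bs (f \<oplus> g) = map (\<lambda>k. coords W bs f ! k + coords W bs g ! k) [0..<length bs]"
    using f g pairing_add_right pairing_coords
    by (intro coords_unique) (auto simp: distrib_right sum.distrib)
  then show "coords W bs (f \<oplus> g) ! k = coords W bs f ! k + coords W bs g ! k" using k by simp
next
  fix a f assume f: "f \<in> Hom C \<I> W"
  have "coords W bs (a \<star> f) = map (\<lambda>k. a * coords W bs f ! k) [0..<length bs]"
    using f pairing_smult_right pairing_coords
    by (intro coords_unique) (auto simp: sum_distrib_left mult.assoc)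
  then show "coords W bs (a \<star> f) ! k = a * coords W bs f ! k" using k by simp
next
  fix f assume f: "f \<in> I1 C ev \<I> W"
  have "coords W bs f = map (\<lambda>k. 0) [0..<length bs]"
    using f by (intro coords_unique) (auto simp: I1_def)
  then show "coords W bs f ! k = 0" using k by simp
qed

lemma coords_basis1:
  assumes l: "l < length bs"
  shows "coords W bs (bs ! l) = map (\<lambda>k. if k = l then 1 else 0) [0..<length bs]"
proof (rule coords_unique[OF basis1_in_Hom[OF l]])
  fix S assume "S \<in> Hom C W \<I>"
  have "(\<Sum>k<length bs. map (\<lambda>k. if k = l then 1 else 0) [0..<length bs] ! k * pair \<I> S (bs ! k))
        = (\<Sum>k<length bs. if k = l then pair \<I> S (bs ! k) else 0)"
    by (intro sum.cong) auto
  then show "pair \<I> S (bs ! l) =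
      (\<Sum>k<length bs. map (\<lambda>k. if k = l then 1 else 0) [0..<length bs] ! k * pair \<I> S (bs ! k))"
    using l by simp
qed simp

end

end

section \<open>Multiplicative evaluations\<close>

locale multiplicative_cat = evaluated_cat +
  assumes multiplicative: "multiplicative C ev"
begin

lemma ev_ide_unit: "ev (ide C \<I>) = 1"
  using multiplicative unfolding multiplicative_def by simp

lemma ev_comp_scalars: "s \<in> Hom C \<I> \<I> \<Longrightarrow> t \<in> Hom C \<I> \<I> \<Longrightarrow> ev (s \<cdot> t) = ev s * ev t"
  using multiplicative tensor_scalars unfolding multiplicative_def by simp

lemma eq1_ev_smult_ide: assumes s: "s \<in> Hom C \<I> \<I>" shows "eq1 C ev \<I> \<I> s (ev s \<star> ide C \<I>)"
proof -
  have "pair \<I> S t = ev S * ev t" if "S \<in> Hom C \<I> \<I>" "t \<in> Hom C \<I> \<I>" for S t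
    using that unfolding pairing_def by (simp add: tr_unit comp_in_Hom ev_comp_scalars)
  then show ?thesis using s by (simp add: eq1_iff_pairing ev_smult ev_ide_unit)
qed

lemma unit_biproduct_ev:
  assumes "unit_biproduct W m p i" "k < m" "l < m"
  shows "ev (p k \<cdot> i l) = (if k = l then 1 else 0)"
proof -
  have "eq1 C ev \<I> \<I> (p k \<cdot> i l) (if k = l then ide C \<I> else mzero C \<I> \<I>)"
    using assms unfolding unit_biproduct_def by blast
  then have "ev (p k \<cdot> i l) = ev (if k = l then ide C \<I> else mzero C \<I> \<I>)"
    using comp_in_Hom[OF unit_biproduct_in_Hom(2)[OF assms(1,3)] unit_biproduct_in_Hom(1)[OF assms(1,2)]]
    by (intro eq1_imp_ev_eq) auto
  then show ?thesis using ev_ide_unit ev_zero by simp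
qed

lemma pairing_rank_one_rank_one:
  assumes a: "a \<in> Hom C \<I> W" and b: "b \<in> Hom C V \<I>" and c: "c \<in> Hom C \<I> V" and e: "e \<in> Hom C W \<I>"
  shows "pair W (a \<cdot> b) (c \<cdot> e) = ev (e \<cdot> a) * ev (b \<cdot> c)"
proof -
  have "pair W (a \<cdot> b) (c \<cdot> e) = ev (e \<cdot> (a \<cdot> b) \<cdot> c)"
    by (rule pairing_through_unit[OF c e comp_in_Hom[OF b a]])
  also have "\<dots> = ev ((e \<cdot> a) \<cdot> (b \<cdot> c))"
    using comp_assoc[OF c b a] comp_assoc[OF comp_in_Hom[OF c b] a e] by simp
  also have "\<dots> = ev (e \<cdot> a) * ev (b \<cdot> c)"
    by (rule ev_comp_scalars[OF comp_in_Hom[OF a e] comp_in_Hom[OF c b]])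
  finally show ?thesis .
qed

lemma pairing_factor_through_unit:
  assumes a: "a \<in> Hom C \<I> V" and b: "b \<in> Hom C V \<I>" and \<Sigma>: "\<Sigma> \<in> Hom C W V"
    and c: "c \<in> Hom C \<I> W" and e: "e \<in> Hom C W \<I>" and X: "X \<in> Hom C V W"
  shows "pair W X ((a \<cdot> b \<cdot> \<Sigma>) \<cdot> c \<cdot> e) = pair W (c \<cdot> b) \<Sigma> * pair W X (a \<cdot> e)"
proof -
  define s where "s = b \<cdot> \<Sigma> \<cdot> c"
  have s: "s \<in> Hom C \<I> \<I>" unfolding s_def using b \<Sigma> c by (blast intro: comp_in_Hom)
  have eXa: "e \<cdot> X \<cdot> a \<in> Hom C \<I> \<I>" using e X a by (blast intro: comp_in_Hom)
  have b\<Sigma>: "b \<cdot> \<Sigma> \<in> Hom C W \<I>" using comp_in_Hom[OF \<Sigma> b] .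
  have "(a \<cdot> b \<cdot> \<Sigma>) \<cdot> c \<cdot> e = a \<cdot> s \<cdot> e"
    using comp_assoc[OF comp_in_Hom[OF e c] b\<Sigma> a] comp_assoc[OF e c b\<Sigma>] comp_assoc[OF c \<Sigma> b]
    unfolding s_def by simp
  then have "pair W X ((a \<cdot> b \<cdot> \<Sigma>) \<cdot> c \<cdot> e) = ev ((s \<cdot> e) \<cdot> X \<cdot> a)"
    using pairing_through_unit[OF a comp_in_Hom[OF e s] X] by simp
  also have "\<dots> = ev s * ev (e \<cdot> X \<cdot> a)"
    using comp_assoc[OF comp_in_Hom[OF a X] e s] ev_comp_scalars[OF s eXa] by simp
  also have "ev s = pair W (c \<cdot> b) \<Sigma>"
    using pairing_commute[OF comp_in_Hom[OF b c] \<Sigma>] pairing_through_unit[OF c b \<Sigma>] s_def by simp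
  also have "ev (e \<cdot> X \<cdot> a) = pair W X (a \<cdot> e)"
    using pairing_through_unit[OF a e X] by simp
  finally show ?thesis .
qed

lemma unit_biproducts_dual_bases:
  assumes bW: "unit_biproduct W m p i" and bV: "unit_biproduct V n p' i'"
  shows "dual_bases W V (List.product [0..<n] [0..<m]) (\<lambda>(l, k). i' l \<cdot> p k) (\<lambda>(l, k). i k \<cdot> p' l)"
  unfolding dual_bases_def
proof (intro conjI ballI)
  note W = unit_biproduct_in_Hom[OF bW] and V = unit_biproduct_in_Hom[OF bV]
  show "distinct (List.product [0..<n] [0..<m])" by (simp add: distinct_product)
next
  fix x assume "x \<in> set (List.product [0..<n] [0..<m])"
  then show "(\<lambda>(l, k). i' l \<cdot> p k) x \<in> Hom C W V" "(\<lambda>(l, k). i k \<cdot> p' l) x \<in> Hom C V W"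
    using unit_biproduct_in_Hom[OF bW] unit_biproduct_in_Hom[OF bV]
    by (auto intro: comp_in_Hom[where B = \<I>])
next
  fix x y assume "x \<in> set (List.product [0..<n] [0..<m])" "y \<in> set (List.product [0..<n] [0..<m])"
  then obtain l k l' k' where x: "x = (l, k)" "l < n" "k < m" and y: "y = (l', k')" "l' < n" "k' < m"
    by auto
  note W = unit_biproduct_in_Hom[OF bW] and V = unit_biproduct_in_Hom[OF bV]
  have "pair W (i k \<cdot> p' l) (i' l' \<cdot> p k') = ev (p k' \<cdot> i k) * ev (p' l \<cdot> i' l')"
    by (rule pairing_rank_one_rank_one[OF W(2)[OF x(3)] V(1)[OF x(2)] V(2)[OF y(2)] W(1)[OF y(3)]])
  also have "\<dots> = (if x = y then 1 else 0)"
    using x y unit_biproduct_ev[OF bW y(3) x(3)] unit_biproduct_ev[OF bV x(2) y(2)] by auto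
  finally show "pair W ((\<lambda>(l, k). i k \<cdot> p' l) x) ((\<lambda>(l, k). i' l \<cdot> p k) y) = (if x = y then 1 else 0)"
    using x y by simp
next
  fix \<Sigma> X assume \<Sigma>: "\<Sigma> \<in> Hom C W V" and X: "X \<in> Hom C V W"
  note W = unit_biproduct_in_Hom[OF bW] and V = unit_biproduct_in_Hom[OF bV]
  have "pair W X \<Sigma> = (\<Sum>l<n. pair W X (i' l \<cdot> p' l \<cdot> \<Sigma>))"
    by (rule pairing_expand_target[OF bV \<Sigma> X])
  also have "\<dots> = (\<Sum>l<n. \<Sum>k<m. pair W X ((i' l \<cdot> p' l \<cdot> \<Sigma>) \<cdot> i k \<cdot> p k))"
    using pairing_expand_source[OF bW comp_in_Hom[OF comp_in_Hom[OF \<Sigma> V(1)] V(2)] X]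
    by (intro sum.cong) auto
  also have "\<dots> = (\<Sum>l<n. \<Sum>k<m. pair W (i k \<cdot> p' l) \<Sigma> * pair W X (i' l \<cdot> p k))"
    using pairing_factor_through_unit[OF V(2) V(1) \<Sigma> W(2) W(1) X] by simp
  also have "\<dots> = (\<Sum>x\<in>set (List.product [0..<n] [0..<m]).
                    pair W ((\<lambda>(l, k). i k \<cdot> p' l) x) \<Sigma> * pair W X ((\<lambda>(l, k). i' l \<cdot> p k) x))"
    by (simp add: sum.cartesian_product atLeast0LessThan split_def)
  finally show "pair W X \<Sigma> = (\<Sum>x\<in>set (List.product [0..<n] [0..<m]).
                    pair W ((\<lambda>(l, k). i k \<cdot> p' l) x) \<Sigma> * pair W X ((\<lambda>(l, k). i' l \<cdot> p k) x))" .
qed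

lemma basis1_dual_unit_biproduct:
  assumes M': "propM' C ev" and basis: "basis1 \<I> W bs"
    and p: "\<And>k. k < length bs \<Longrightarrow> p k \<in> Hom C W \<I>"
    and p_coords: "\<And>k a. k < length bs \<Longrightarrow> a \<in> Hom C \<I> W \<Longrightarrow> ev (p k \<cdot> a) = coords W bs a ! k"
  shows "unit_biproduct W (length bs) p (nth bs)"
  unfolding unit_biproduct_def
proof (intro conjI allI impI)
  note bs = basis1_in_Hom[OF basis]
  fix k assume "k < length bs" then show "p k \<in> Hom C W \<I>" "bs ! k \<in> Hom C \<I> W" using p bs by auto
next
  note bs = basis1_in_Hom[OF basis]
  fix k l assume k: "k < length bs" and l: "l < length bs"
  have "ev (p k \<cdot> bs ! l) \<star> ide C \<I> = (if k = l then ide C \<I> else mzero C \<I> \<I>)"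
    using p_coords[OF k bs[OF l]] coords_basis1[OF basis l] k
      one_smult[OF ide_in_Hom] smult_zero[OF ide_in_Hom] by simp
  then show "eq1 C ev \<I> \<I> (p k \<cdot> bs ! l) (if k = l then ide C \<I> else mzero C \<I> \<I>)"
    using eq1_ev_smult_ide[OF comp_in_Hom[OF bs[OF l] p[OF k]]] by simp
next
  let ?m = "length bs" and ?T = "msum C W W (map (\<lambda>k. bs ! k \<cdot> p k) [0..<length bs])"
  note bs = basis1_in_Hom[OF basis]
  have terms: "bs ! k \<cdot> p k \<in> Hom C W W" if "k < ?m" for k using that p bs by (blast intro: comp_in_Hom)
  show "eq1 C ev W W ?T (ide C W)"
  proof (rule eq1_if_rank_one_pairings_eq[OF M' msum_upt_in_Hom[OF terms] ide_in_Hom])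
    fix a b assume a: "a \<in> Hom C \<I> W" and b: "b \<in> Hom C W \<I>"
    have "pair W (a \<cdot> b) ?T = (\<Sum>k<?m. pair W (a \<cdot> b) (bs ! k \<cdot> p k))"
      using pairing_msum_upt[OF comp_in_Hom[OF b a] terms] .
    also have "\<dots> = (\<Sum>k<?m. coords W bs a ! k * pair \<I> b (bs ! k))"
      using pairing_rank_one_rank_one[OF a b bs p] p_coords[OF _ a] pairing_at_unit[OF b bs]
      by (intro sum.cong) auto
    also have "\<dots> = pair \<I> b a" using pairing_coords[OF basis a b] by simp
    also have "\<dots> = pair W (a \<cdot> b) (ide C W)"
      using comp_ide_right[OF comp_in_Hom[OF b a]] tr_rank_one[OF a b] pairing_at_unit[OF b a]
      unfolding pairing_def by simp
    finally show "pair W (a \<cdot> b) ?T = pair W (a \<cdot> b) (ide C W)" .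
  qed
qed

end

section \<open>Reversal and the equivalence\<close>

locale involutive_cat = multiplicative_cat C ev
    for C :: "('o, 'm, 'k::comm_ring_1) lincat" and ev :: "'m \<Rightarrow> 'k" +
  fixes \<iota> :: "'k \<Rightarrow> 'k"
  assumes ring_involution: "ring_involution \<iota>"
    and involutive: "iota_involutive C ev \<iota>"
begin

lemma rev_in_Hom: "f \<in> Hom C A B \<Longrightarrow> rev C f \<in> Hom C B A"
  using involutive unfolding iota_involutive_def by simp
lemma rev_rev: "f \<in> Hom C A B \<Longrightarrow> rev C (rev C f) = f"
  using involutive unfolding iota_involutive_def by simp

lemma rev_comp: "f \<in> Hom C A B \<Longrightarrow> g \<in> Hom C B D \<Longrightarrow> rev C (g \<cdot> f) = rev C f \<cdot> rev C g"
  using involutive unfolding iota_involutive_def by simp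
lemma tr_rev: "f \<in> Hom C W W \<Longrightarrow> tr C W (rev C f) = rev C (tr C W f)"
  using involutive unfolding iota_involutive_def by simp
lemma ev_rev: "s \<in> Hom C \<I> \<I> \<Longrightarrow> ev (rev C s) = \<iota> (ev s)"
  using involutive unfolding iota_involutive_def by simp

lemma pairing_rev:
  assumes f: "f \<in> Hom C W V" and X: "X \<in> Hom C V W"
  shows "pair W (rev C f) (rev C X) = \<iota> (pair W X f)"
  unfolding pairing_def
  using rev_comp[OF f X] tr_rev[OF comp_in_Hom[OF f X]] ev_rev[OF tr_in_Hom[OF comp_in_Hom[OF f X]]]
  by simp

lemma pairing_rev_injective:
  assumes f: "f \<in> Hom C W V" and g: "g \<in> Hom C W V"
    and eq: "\<forall>\<Sigma>\<in>Hom C W V. pair W (rev C f) \<Sigma> = pair W (rev C g) \<Sigma>"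
  shows "eq1 C ev W V f g"
  unfolding eq1_iff_pairing[OF f g]
proof
  fix X assume X: "X \<in> Hom C V W"
  have "\<iota> (pair W X f) = \<iota> (pair W X g)"
    using eq rev_in_Hom[OF X] pairing_rev[OF f X] pairing_rev[OF g X] by simp
  then show "pair W X f = pair W X g"
    using ring_involution unfolding ring_involution_def by metis
qed

lemma dual_bases_pairing_bij:
  assumes db: "dual_bases W V P b d"
  shows "pairing_bij C ev W V"
  unfolding pairing_bij_def
proof (intro conjI ballI impI)
  fix f g assume "f \<in> Hom C W V" "g \<in> Hom C W V"
    "\<forall>\<Sigma>\<in>Hom C W V. pair W (rev C f) \<Sigma> = pair W (rev C g) \<Sigma>"
  then show "eq1 C ev W V f g" by (rule pairing_rev_injective)
next
  fix \<phi> assume \<phi>: "\<phi> \<in> dual1 C ev W V"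
  have \<phi>_add: "\<phi> (f \<oplus> g) = \<phi> f + \<phi> g" if "f \<in> Hom C W V" "g \<in> Hom C W V" for f g
    using \<phi> that unfolding dual1_def by blast
  have \<phi>_smult: "\<phi> (a \<star> f) = a * \<phi> f" if "f \<in> Hom C W V" for a f
    using \<phi> that unfolding dual1_def by blast
  note P = dual_bases_distinct[OF db] and in_Hom = dual_bases_in_Hom[OF db]
  define X where "X = lincomb C V W (map (\<lambda>x. \<phi> (b x)) P) (map d P)"
  have X: "X \<in> Hom C V W" unfolding X_def using in_Hom(2) by (intro lincomb_in_Hom) auto
  show "\<exists>\<Sigma>'\<in>Hom C W V. \<forall>\<Sigma>\<in>Hom C W V. \<phi> \<Sigma> = pair W (rev C \<Sigma>') \<Sigma>"
  proof (intro bexI[OF _ rev_in_Hom[OF X]] ballI)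
    fix \<Sigma> assume \<Sigma>: "\<Sigma> \<in> Hom C W V"
    have "\<phi> \<Sigma> = \<phi> (lincomb C W V (map (\<lambda>x. pair W (d x) \<Sigma>) P) (map b P))"
      using dual1_eq1[OF \<phi> \<Sigma> lincomb_in_Hom dual_basis_span[OF db \<Sigma>]] dual_basis_in_Hom[OF db] by simp
    also have "\<dots> = (\<Sum>x\<in>set P. pair W (d x) \<Sigma> * \<phi> (b x))"
      by (rule linear_lincomb_distinct[OF \<phi>_add \<phi>_smult P in_Hom(1)])
    also have "\<dots> = pair V \<Sigma> X"
      unfolding X_def using \<Sigma> P in_Hom pairing_commute[OF in_Hom(2) \<Sigma>]
      by (subst linear_lincomb_distinct) (auto simp: pairing_add_right pairing_smult_right mult.commute)
    also have "\<dots> = pair W (rev C (rev C X)) \<Sigma>" using pairing_commute[OF X \<Sigma>] rev_rev[OF X] by simp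
    finally show "\<phi> \<Sigma> = pair W (rev C (rev C X)) \<Sigma>" .
  qed
qed

lemma pairing_bij_imp_representable:
  assumes "pairing_bij C ev W V" "\<phi> \<in> dual1 C ev W V"
  shows "\<exists>q\<in>Hom C V W. \<forall>\<Sigma>\<in>Hom C W V. \<phi> \<Sigma> = pair W q \<Sigma>"
  using assms rev_in_Hom unfolding pairing_bij_def by blast

theorem propA_imp_propF: assumes "propA C ev" shows "propF C ev"
  unfolding propF_def
proof (intro allI conjI)
  fix V W
  obtain m p i where bW: "unit_biproduct W m p i"
    using assms biproduct_of_units1_iff unfolding propA_def by blast
  obtain n p' i' where bV: "unit_biproduct V n p' i'"
    using assms biproduct_of_units1_iff unfolding propA_def by blast
  note db = unit_biproducts_dual_bases[OF bW bV]
  show "free_finite_rank1 C ev W V" using dual_basis_basis1[OF db] free_finite_rank1_iff by blast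
  show "pairing_bij C ev W V" by (rule dual_bases_pairing_bij[OF db])
qed

theorem propF_propM'_imp_propA:
  assumes F: "propF C ev" and M': "propM' C ev"
  shows "propA C ev"
  unfolding propA_def biproduct_of_units1_iff
proof
  fix W
  obtain bs where basis: "basis1 \<I> W bs" using F free_finite_rank1_iff unfolding propF_def by blast
  have "\<forall>k. \<exists>q. k < length bs \<longrightarrow>
          q \<in> Hom C W \<I> \<and> (\<forall>a\<in>Hom C \<I> W. coords W bs a ! k = pair \<I> q a)"
    using F pairing_bij_imp_representable coord_in_dual1[OF basis] unfolding propF_def by blast
  then obtain p where p: "\<And>k. k < length bs \<Longrightarrow> p k \<in> Hom C W \<I>"
    and rep: "\<And>k a. k < length bs \<Longrightarrow> a \<in> Hom C \<I> W \<Longrightarrow> coords W bs a ! k = pair \<I> (p k) a"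
    by metis
  have p_coords: "ev (p k \<cdot> a) = coords W bs a ! k" if "k < length bs" "a \<in> Hom C \<I> W" for k a
    using rep[OF that] pairing_at_unit[OF p[OF that(1)] that(2)] by simp
  have "unit_biproduct W (length bs) p (nth bs)"
    using M' basis p p_coords by (rule basis1_dual_unit_biproduct)
  then show "\<exists>m p i. unit_biproduct W m p i" by blast
qed

end

theorem mainTheorem8:
  fixes C :: "('o, 'm, 'k::comm_ring_1) lincat"
    and ev :: "'m \<Rightarrow> 'k"
    and \<iota> :: "'k \<Rightarrow> 'k"
  assumes "ring_involution \<iota>"
    and "setting C ev"
    and "multiplicative C ev"
    and "iota_involutive C ev \<iota>"
  shows "(propF C ev \<and> propM' C ev) \<longleftrightarrow> propA C ev"
proof -
  interpret involutive_cat C ev \<iota>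
    by unfold_locales (fact assms)+
  show ?thesis using propA_imp_propF propA_imp_propM' propF_propM'_imp_propA by blast
qed

end
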